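(* Let $\mathcal{F}=(\mu_n,\mathcal{S}_n,K_n,\pi_n)_{n\ge1}$ be a family of irreducible, reversible discrete-time finite Markov chains and $\mathcal{F}_c$ the family of associated continuous-time chains (generators $K_n-I$). Assume $\inf_{n,x}K_n(x,x)>1/2$, $\pi_n(|\mu_n/\pi_n|^2)\to\infty$, and that there is $\epsilon_0>0$ such that $T_{n,2}(\mu_n,\epsilon_0)\to\infty$ or $T^{(c)}_{n,2}(\mu_n,\epsilon_0)\to\infty$. Then $\mathcal{F}$ has an $L^2$-cutoff if and only if $\mathcal{F}_c$ has an $L^2$-cutoff.
   Context: $T_{n,2}$ and $T^{(c)}_{n,2}$ are the $L^2$-mixing times of the $n$th chains in $\mathcal{F}$ and $\mathcal{F}_c$: $T_2(\mu,\epsilon)=\min\{t\ge0:d_2(\mu,t)\le\epsilon\}$ where $d_2(\mu,m)=\|\mu K^m/\pi-1\|_{L^2(\pi)}$ (integer $m$) in discrete time and $d_2(\mu,t)=\|\mu e^{t(K-I)}/\pi-1\|_{L^2(\pi)}$ in continuous time, $\|f\|^2_{L^2(\pi)}=\sum_y|f(y)|^2\pi(y)$. $\pi(|\mu/\pi|^2)=\sum_y\mu(y)^2/\pi(y)$. $L^2$-cutoff: there is $t_n>0$ with $d_{n,2}(\mu_n,(1+a)t_n)\to0$ and $d_{n,2}(\mu_n,(1-a)t_n)\to\infty$ for all $a\in(0,1)$ (in discrete time with $\lceil(1+a)t_n\rceil$, $\lfloor(1-a)t_n\rfloor$). *)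

theory Defs
  imports Complex_Main
begin

fun kpow :: "('a \<Rightarrow> 'a \<Rightarrow> real) \<Rightarrow> 'a set \<Rightarrow> nat \<Rightarrow> 'a \<Rightarrow> 'a \<Rightarrow> real" where
  "kpow K S 0 x y = (if x = y then 1 else 0)"
| "kpow K S (Suc m) x y = (\<Sum>z\<in>S. kpow K S m x z * K z y)"

definition prob_on :: "'a set \<Rightarrow> ('a \<Rightarrow> real) \<Rightarrow> bool" where
  "prob_on S p \<longleftrightarrow> (\<forall>x\<in>S. p x \<ge> 0) \<and> (\<Sum>x\<in>S. p x) = 1"

definition markov_kernel :: "'a set \<Rightarrow> ('a \<Rightarrow> 'a \<Rightarrow> real) \<Rightarrow> bool" where
  "markov_kernel S K \<longleftrightarrow> finite S \<and> S \<noteq> {} \<and>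
     (\<forall>x\<in>S. \<forall>y\<in>S. K x y \<ge> 0) \<and> (\<forall>x\<in>S. (\<Sum>y\<in>S. K x y) = 1)"

definition irreducible_chain :: "'a set \<Rightarrow> ('a \<Rightarrow> 'a \<Rightarrow> real) \<Rightarrow> bool" where
  "irreducible_chain S K \<longleftrightarrow> (\<forall>x\<in>S. \<forall>y\<in>S. \<exists>m. kpow K S m x y > 0)"

definition reversible_chain :: "'a set \<Rightarrow> ('a \<Rightarrow> 'a \<Rightarrow> real) \<Rightarrow> ('a \<Rightarrow> real) \<Rightarrow> bool" where
  "reversible_chain S K \<pi> \<longleftrightarrow> prob_on S \<pi> \<and> (\<forall>x\<in>S. \<pi> x > 0) \<and>
     (\<forall>x\<in>S. \<forall>y\<in>S. \<pi> x * K x y = \<pi> y * K y x)"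

text \<open>Distribution at time m (discrete) and at time t (continuous, e^{t(K-I)}).\<close>
definition dist_disc :: "'a set \<Rightarrow> ('a \<Rightarrow> 'a \<Rightarrow> real) \<Rightarrow> ('a \<Rightarrow> real) \<Rightarrow> nat \<Rightarrow> 'a \<Rightarrow> real" where
  "dist_disc S K \<mu> m y = (\<Sum>x\<in>S. \<mu> x * kpow K S m x y)"

definition heat_kernel :: "'a set \<Rightarrow> ('a \<Rightarrow> 'a \<Rightarrow> real) \<Rightarrow> real \<Rightarrow> 'a \<Rightarrow> 'a \<Rightarrow> real" where
  "heat_kernel S K t x y = (\<Sum>k. exp (- t) * t ^ k / fact k * kpow K S k x y)"

definition dist_cont :: "'a set \<Rightarrow> ('a \<Rightarrow> 'a \<Rightarrow> real) \<Rightarrow> ('a \<Rightarrow> real) \<Rightarrow> real \<Rightarrow> 'a \<Rightarrow> real" where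
  "dist_cont S K \<mu> t y = (\<Sum>x\<in>S. \<mu> x * heat_kernel S K t x y)"

definition l2dist :: "'a set \<Rightarrow> ('a \<Rightarrow> real) \<Rightarrow> ('a \<Rightarrow> real) \<Rightarrow> real" where
  "l2dist S \<pi> \<nu> = sqrt (\<Sum>y\<in>S. \<bar>\<nu> y / \<pi> y - 1\<bar>\<^sup>2 * \<pi> y)"

definition d2_disc :: "'a set \<Rightarrow> ('a \<Rightarrow> 'a \<Rightarrow> real) \<Rightarrow> ('a \<Rightarrow> real) \<Rightarrow> ('a \<Rightarrow> real) \<Rightarrow> nat \<Rightarrow> real" where
  "d2_disc S K \<pi> \<mu> m = l2dist S \<pi> (dist_disc S K \<mu> m)"

definition d2_cont :: "'a set \<Rightarrow> ('a \<Rightarrow> 'a \<Rightarrow> real) \<Rightarrow> ('a \<Rightarrow> real) \<Rightarrow> ('a \<Rightarrow> real) \<Rightarrow> real \<Rightarrow> real" where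
  "d2_cont S K \<pi> \<mu> t = l2dist S \<pi> (dist_cont S K \<mu> t)"

definition T2_disc :: "'a set \<Rightarrow> ('a \<Rightarrow> 'a \<Rightarrow> real) \<Rightarrow> ('a \<Rightarrow> real) \<Rightarrow> ('a \<Rightarrow> real) \<Rightarrow> real \<Rightarrow> nat" where
  "T2_disc S K \<pi> \<mu> \<epsilon> = (LEAST m. d2_disc S K \<pi> \<mu> m \<le> \<epsilon>)"

definition T2_cont :: "'a set \<Rightarrow> ('a \<Rightarrow> 'a \<Rightarrow> real) \<Rightarrow> ('a \<Rightarrow> real) \<Rightarrow> ('a \<Rightarrow> real) \<Rightarrow> real \<Rightarrow> real" where
  "T2_cont S K \<pi> \<mu> \<epsilon> = Inf {t. t \<ge> 0 \<and> d2_cont S K \<pi> \<mu> t \<le> \<epsilon>}"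

definition L2_cutoff_disc :: "(nat \<Rightarrow> 'a set) \<Rightarrow> (nat \<Rightarrow> 'a \<Rightarrow> 'a \<Rightarrow> real) \<Rightarrow> (nat \<Rightarrow> 'a \<Rightarrow> real) \<Rightarrow> (nat \<Rightarrow> 'a \<Rightarrow> real) \<Rightarrow> bool" where
  "L2_cutoff_disc S K \<pi> \<mu> \<longleftrightarrow> (\<exists>tn :: nat \<Rightarrow> real. (\<forall>n. tn n > 0) \<and>
     (\<forall>a. 0 < a \<and> a < 1 \<longrightarrow>
        ((\<lambda>n. d2_disc (S n) (K n) (\<pi> n) (\<mu> n) (nat \<lceil>(1 + a) * tn n\<rceil>)) \<longlonglongrightarrow> 0) \<and>
        filterlim (\<lambda>n. d2_disc (S n) (K n) (\<pi> n) (\<mu> n) (nat \<lfloor>(1 - a) * tn n\<rfloor>)) at_top sequentially))"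

definition L2_cutoff_cont :: "(nat \<Rightarrow> 'a set) \<Rightarrow> (nat \<Rightarrow> 'a \<Rightarrow> 'a \<Rightarrow> real) \<Rightarrow> (nat \<Rightarrow> 'a \<Rightarrow> real) \<Rightarrow> (nat \<Rightarrow> 'a \<Rightarrow> real) \<Rightarrow> bool" where
  "L2_cutoff_cont S K \<pi> \<mu> \<longleftrightarrow> (\<exists>tn :: nat \<Rightarrow> real. (\<forall>n. tn n > 0) \<and>
     (\<forall>a. 0 < a \<and> a < 1 \<longrightarrow>
        ((\<lambda>n. d2_cont (S n) (K n) (\<pi> n) (\<mu> n) ((1 + a) * tn n)) \<longlonglongrightarrow> 0) \<and>
        filterlim (\<lambda>n. d2_cont (S n) (K n) (\<pi> n) (\<mu> n) ((1 - a) * tn n)) at_top sequentially))"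

end

theory Submission
  imports Defs "HOL-Computational_Algebra.Fundamental_Theorem_Algebra"
begin

text \<open>Write \<open>\<mu>/\<pi> - 1 = \<Sum>\<^sub>r e\<^sub>r\<close> in eigenvectors of the self-adjoint operator \<open>K\<close> on
  \<open>L\<^sup>2(\<pi>)\<close> and put \<open>w\<^sub>r = \<parallel>e\<^sub>r\<parallel>\<^sup>2\<close>. Then \<open>d\<^sub>2(m)\<^sup>2 = \<Sum>\<^sub>r w\<^sub>r exp (-2 m ln (1/r))\<close> in discrete time
  and \<open>d\<^sub>2(t)\<^sup>2 = \<Sum>\<^sub>r w\<^sub>r exp (-2 t (1 - r))\<close> in continuous time: two Laplace transforms of the same
  weights. Laziness \<open>K(x,x) \<ge> c > 1/2\<close> confines the spectrum to \<open>[2c - 1, 1]\<close>, where the rates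
  \<open>ln (1/r)\<close> and \<open>1 - r\<close> agree up to the factor \<open>1/(2c - 1)\<close>.

  Cutoff of such exponential sums survives comparable changes of the rates. Cutoff at times
  \<open>t\<^sub>n\<close> forces the weight of the modes with \<open>rate \<cdot> t\<^sub>n\<close> bounded to vanish; for the new rates this
  weight, taken at the time \<open>T\<^sub>n\<close> where the new profile first drops to 1 (which is comparable to
  \<open>t\<^sub>n\<close>), then vanishes too, and the remaining modes decay by a factor \<open>exp (-M a)\<close> over the
  window \<open>a T\<^sub>n\<close>. Finally, rounding to integer times is harmless since the total weight
  \<open>\<pi>(|\<mu>/\<pi>|\<^sup>2) - 1\<close> tends to infinity, which forces all cutoff times to infinity.\<close>

section \<open>Real polynomials\<close>

lemma poly_map_of_real_add:
  "poly (map_poly complex_of_real (p + q)) z = poly (map_poly of_real p) z + poly (map_poly of_real q) z"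
proof (induction p arbitrary: q)
  case (pCons a p)
  then show ?case by (cases q) (simp add: map_poly_pCons algebra_simps)
qed simp

lemma poly_map_of_real_smult:
  "poly (map_poly complex_of_real (smult c p)) z = of_real c * poly (map_poly of_real p) z"
  by (induction p) (simp_all add: map_poly_pCons algebra_simps)

lemma poly_map_of_real_mult:
  "poly (map_poly complex_of_real (p * q)) z = poly (map_poly of_real p) z * poly (map_poly of_real q) z"
  by (induction p) (simp_all add: map_poly_pCons algebra_simps poly_map_of_real_add poly_map_of_real_smult)

lemma poly_map_of_real_of_real:
  "poly (map_poly complex_of_real p) (of_real x) = of_real (poly p x)"
  by (induction p) (auto simp: map_poly_pCons)

lemma real_poly_linear_or_quadratic_factor:
  fixes p :: "real poly"
  assumes "degree p \<ge> 1"
  shows "(\<exists>r h. p = [:-r, 1:] * h) \<or> (\<exists>a b h. b \<noteq> 0 \<and> p = [:a\<^sup>2 + b\<^sup>2, -2 * a, 1:] * h)"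
proof -
  have "degree (map_poly complex_of_real p) = degree p"
    by (rule degree_map_poly) simp
  then have "\<not> constant (poly (map_poly complex_of_real p))"
    using assms constant_degree by force
  then obtain z where z: "poly (map_poly complex_of_real p) z = 0"
    using fundamental_theorem_of_algebra by blast
  show ?thesis
  proof (cases "Im z = 0")
    case True
    then have "poly p (Re z) = 0"
      using z poly_map_of_real_of_real[of p "Re z"] by (simp add: complex_is_Real_iff)
    then show ?thesis
      using poly_eq_0_iff_dvd unfolding dvd_def by blast
  next
    case False
    define q where "q = [:(Re z)\<^sup>2 + (Im z)\<^sup>2, -2 * Re z, 1:]"
    define r where "r = p mod q"
    \<comment> \<open>\<open>q\<close> is the real quadratic with roots \<open>z\<close> and \<open>cnj z\<close>; the remainder has degree \<open>\<le> 1\<close>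
      and a non-real root, hence vanishes.\<close>
    have qz: "poly (map_poly complex_of_real q) z = 0"
      by (simp add: q_def map_poly_pCons complex_eq_iff power2_eq_square algebra_simps)
    have p_eq: "p = p div q * q + r" unfolding r_def by simp
    then have "poly (map_poly complex_of_real r) z = 0"
      using z qz poly_map_of_real_add poly_map_of_real_mult by (metis add_0 mult_zero_right)
    moreover have "degree r \<le> 1"
      using degree_mod_less[of q p] unfolding r_def q_def by auto
    then have r_lin: "r = [:coeff r 0, coeff r 1:]"
      by (intro poly_eqI) (auto simp: coeff_pCons coeff_eq_0 split: nat.splits)
    ultimately have "poly (map_poly complex_of_real [:coeff r 0, coeff r 1:]) z = 0"
      by metis
    then have "of_real (coeff r 0) + of_real (coeff r 1) * z = 0"
      by (simp add: map_poly_pCons mult.commute)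
    then have "coeff r 1 = 0" "coeff r 0 = 0"
      using False by (auto simp: complex_eq_iff)
    then have "r = 0" using r_lin by simp
    then have "p = q * (p div q)" using p_eq by (simp add: mult.commute)
    then show ?thesis using False unfolding q_def by blast
  qed
qed

section \<open>Spectral decomposition of reversible kernels\<close>

lemma exists_nontrivial_vanishing_combination:
  fixes v :: "'i \<Rightarrow> 'a \<Rightarrow> real"
  assumes "finite S" "finite I" "card S < card I"
  shows "\<exists>c. (\<exists>i\<in>I. c i \<noteq> 0) \<and> (\<forall>x\<in>S. (\<Sum>i\<in>I. c i * v i x) = 0)"
  using assms
proof (induction S arbitrary: I v rule: finite_induct)
  case empty
  then obtain i where "i \<in> I" by fastforce
  then show ?case by (intro exI[of _ "\<lambda>_. 1"]) auto
next
  case (insert a S)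
  show ?case
  proof (cases "\<forall>i\<in>I. v i a = 0")
    case True
    have "card S < card I" using insert by simp
    then obtain c where c: "\<exists>i\<in>I. c i \<noteq> 0" "\<forall>x\<in>S. (\<Sum>i\<in>I. c i * v i x) = 0"
      using insert.IH[of I v] insert.prems by blast
    then show ?thesis using True by auto
  next
    case False
    then obtain j where j: "j \<in> I" "v j a \<noteq> 0" by blast
    \<comment> \<open>Eliminate the coordinate \<open>a\<close> using \<open>v j\<close> and recurse on the remaining vectors.\<close>
    define u where "u i x = v i x - (v i a / v j a) * v j x" for i x
    have "card S < card (I - {j})" using insert j by simp
    then obtain c where c: "\<exists>i\<in>I-{j}. c i \<noteq> 0" "\<forall>x\<in>S. (\<Sum>i\<in>I-{j}. c i * u i x) = 0"
      using insert.IH[of "I - {j}" u] insert.prems by blast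
    define c' where "c' i = (if i = j then - (\<Sum>i\<in>I-{j}. c i * v i a) / v j a else c i)" for i
    have comb: "(\<Sum>i\<in>I. c' i * v i x) = (\<Sum>i\<in>I-{j}. c i * u i x)" for x
    proof -
      have "(\<Sum>i\<in>I. c' i * v i x) = c' j * v j x + (\<Sum>i\<in>I-{j}. c i * v i x)"
        using j insert.prems by (simp add: sum.remove c'_def)
      also have "(\<Sum>i\<in>I-{j}. c i * v i x) = (\<Sum>i\<in>I-{j}. c i * u i x + c i * v i a / v j a * v j x)"
        by (rule sum.cong) (auto simp: u_def algebra_simps)
      also have "\<dots> = (\<Sum>i\<in>I-{j}. c i * u i x) + (\<Sum>i\<in>I-{j}. c i * v i a) / v j a * v j x"
        by (simp only: sum.distrib sum_divide_distrib sum_distrib_right)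
      finally show ?thesis using j by (simp add: c'_def)
    qed
    have "(\<Sum>i\<in>I-{j}. c i * u i a) = 0" using j by (simp add: u_def)
    then have "\<forall>x\<in>insert a S. (\<Sum>i\<in>I. c' i * v i x) = 0" using c(2) comb by auto
    moreover have "\<exists>i\<in>I. c' i \<noteq> 0" using c(1) unfolding c'_def by auto
    ultimately show ?thesis by blast
  qed
qed

locale reversible_kernel =
  fixes S :: "'a set" and K :: "'a \<Rightarrow> 'a \<Rightarrow> real" and \<pi> :: "'a \<Rightarrow> real"
  assumes finite_S: "finite S" and \<pi>_pos: "\<And>x. x \<in> S \<Longrightarrow> 0 < \<pi> x"
    and detailed_balance: "\<And>x y. x \<in> S \<Longrightarrow> y \<in> S \<Longrightarrow> \<pi> x * K x y = \<pi> y * K y x"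
begin

definition Kop :: "('a \<Rightarrow> real) \<Rightarrow> 'a \<Rightarrow> real" where
  "Kop g x = (\<Sum>y\<in>S. K x y * g y)"

definition pinner :: "('a \<Rightarrow> real) \<Rightarrow> ('a \<Rightarrow> real) \<Rightarrow> real" where
  "pinner f g = (\<Sum>x\<in>S. f x * g x * \<pi> x)"

lemma Kop_add: "Kop (\<lambda>x. f x + g x) = (\<lambda>x. Kop f x + Kop g x)"
  by (simp add: fun_eq_iff Kop_def algebra_simps sum.distrib)

lemma Kop_diff: "Kop (\<lambda>x. f x - g x) = (\<lambda>x. Kop f x - Kop g x)"
  by (simp add: fun_eq_iff Kop_def algebra_simps sum_subtractf)

lemma Kop_scale: "Kop (\<lambda>x. c * f x) = (\<lambda>x. c * Kop f x)"
  by (simp add: fun_eq_iff Kop_def sum_distrib_left mult_ac)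

lemma Kop_zero: "Kop (\<lambda>x. 0) = (\<lambda>x. 0)"
  by (simp add: fun_eq_iff Kop_def)

lemma Kop_sum: "Kop (\<lambda>x. \<Sum>i\<in>R. F i x) = (\<lambda>x. \<Sum>i\<in>R. Kop (F i) x)"
  by (simp add: fun_eq_iff Kop_def sum_distrib_left sum.swap[of _ S])

lemma Kop_cong: "(\<And>x. x \<in> S \<Longrightarrow> f x = g x) \<Longrightarrow> Kop f = Kop g"
  by (simp add: fun_eq_iff Kop_def)

lemma pinner_cong:
  "(\<And>x. x \<in> S \<Longrightarrow> f x = f' x) \<Longrightarrow> (\<And>x. x \<in> S \<Longrightarrow> g x = g' x) \<Longrightarrow> pinner f g = pinner f' g'"
  by (simp add: pinner_def)

lemma pinner_commute: "pinner f g = pinner g f"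
  by (simp add: pinner_def mult_ac)

lemma pinner_scale: "pinner (\<lambda>x. a * f x) (\<lambda>x. b * g x) = a * b * pinner f g"
  by (simp add: pinner_def sum_distrib_left algebra_simps)

lemma pinner_sum_left: "pinner (\<lambda>x. \<Sum>i\<in>R. F i x) g = (\<Sum>i\<in>R. pinner (F i) g)"
  by (simp add: pinner_def sum_distrib_right sum.swap[of _ S])

lemma pinner_self_nonneg: "0 \<le> pinner g g"
  unfolding pinner_def by (intro sum_nonneg) (simp add: \<pi>_pos less_imp_le)

lemma pinner_self_eq_0D:
  assumes "pinner g g = 0" "x \<in> S"
  shows "g x = 0"
proof -
  have "\<forall>y\<in>S. g y * g y * \<pi> y = 0"
    using assms(1) unfolding pinner_def
    by (subst sum_nonneg_eq_0_iff[symmetric]) (auto simp: finite_S \<pi>_pos less_imp_le)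
  then show ?thesis using assms(2) \<pi>_pos[of x] by auto
qed

lemma Kop_self_adjoint: "pinner (Kop f) g = pinner f (Kop g)"
proof -
  have "pinner (Kop f) g = (\<Sum>x\<in>S. \<Sum>y\<in>S. (\<pi> x * K x y) * f y * g x)"
    by (simp add: pinner_def Kop_def sum_distrib_right sum_distrib_left algebra_simps)
  also have "\<dots> = (\<Sum>x\<in>S. \<Sum>y\<in>S. (\<pi> y * K y x) * f y * g x)"
    by (intro sum.cong refl) (simp add: detailed_balance)
  also have "\<dots> = (\<Sum>y\<in>S. \<Sum>x\<in>S. (\<pi> y * K y x) * f y * g x)"
    by (rule sum.swap)
  also have "\<dots> = pinner f (Kop g)"
    by (simp add: pinner_def Kop_def sum_distrib_left algebra_simps)
  finally show ?thesis .
qed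

lemma pinner_eigenvectors_orthogonal:
  assumes "\<And>x. x \<in> S \<Longrightarrow> Kop e x = r * e x" "\<And>x. x \<in> S \<Longrightarrow> Kop e' x = s * e' x" "r \<noteq> s"
  shows "pinner e e' = 0"
proof -
  have "r * pinner e e' = pinner (\<lambda>x. r * e x) e'"
    using pinner_scale[of r e 1 e'] by simp
  also have "\<dots> = pinner (Kop e) e'"
    by (rule pinner_cong) (simp_all add: assms)
  also have "\<dots> = pinner e (Kop e')" by (rule Kop_self_adjoint)
  also have "\<dots> = pinner e (\<lambda>x. s * e' x)"
    by (rule pinner_cong) (simp_all add: assms)
  also have "\<dots> = s * pinner e e'"
    using pinner_scale[of 1 e s e'] by simp
  finally show ?thesis using assms(3) by simp
qed

lemma pinner_eigenfamily_orthogonal: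
  assumes "\<And>r x. r \<in> R \<Longrightarrow> x \<in> S \<Longrightarrow> Kop (e r) x = r * e r x" "r \<in> R" "s \<in> R" "s \<noteq> r"
  shows "pinner (e s) (e r) = 0"
  using assms by (intro pinner_eigenvectors_orthogonal) auto

lemma pinner_orthogonal_sum:
  assumes "finite R" and eigen: "\<And>r x. r \<in> R \<Longrightarrow> x \<in> S \<Longrightarrow> Kop (e r) x = r * e r x"
  shows "pinner (\<lambda>x. \<Sum>r\<in>R. c r * e r x) (\<lambda>x. \<Sum>r\<in>R. c r * e r x) = (\<Sum>r\<in>R. (c r)\<^sup>2 * pinner (e r) (e r))"
proof -
  let ?g = "\<lambda>x. \<Sum>r\<in>R. c r * e r x"
  have "pinner (\<lambda>x. c r * e r x) ?g = (c r)\<^sup>2 * pinner (e r) (e r)" if r: "r \<in> R" for r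
  proof -
    have "pinner (\<lambda>x. c r * e r x) ?g = (\<Sum>s\<in>R. c s * c r * pinner (e s) (e r))"
      by (simp only: pinner_commute[of _ ?g] pinner_sum_left pinner_scale)
    also have "\<dots> = c r * c r * pinner (e r) (e r) + (\<Sum>s\<in>R-{r}. c s * c r * pinner (e s) (e r))"
      using assms(1) r by (simp add: sum.remove)
    also have "(\<Sum>s\<in>R-{r}. c s * c r * pinner (e s) (e r)) = 0"
      using r by (intro sum.neutral) (simp add: pinner_eigenfamily_orthogonal[OF eigen])
    finally show ?thesis by (simp add: power2_eq_square)
  qed
  then show ?thesis by (simp add: pinner_sum_left)
qed

text \<open>The operator \<open>p(K)\<close>, evaluated by Horner's scheme.\<close>

definition poly_Kop :: "real poly \<Rightarrow> ('a \<Rightarrow> real) \<Rightarrow> 'a \<Rightarrow> real" where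
  "poly_Kop p g = fold_coeffs (\<lambda>c h x. c * g x + Kop h x) p (\<lambda>x. 0)"

lemma poly_Kop_0 [simp]: "poly_Kop 0 g = (\<lambda>x. 0)"
  by (simp add: poly_Kop_def)

lemma poly_Kop_pCons: "poly_Kop (pCons a p) g = (\<lambda>x. a * g x + Kop (poly_Kop p g) x)"
  by (cases "p = 0 \<and> a = 0") (auto simp: poly_Kop_def Kop_zero)

lemma poly_Kop_add: "poly_Kop (p + q) g = (\<lambda>x. poly_Kop p g x + poly_Kop q g x)"
proof (induction p arbitrary: q)
  case (pCons a p)
  then show ?case by (cases q) (simp add: poly_Kop_pCons Kop_add algebra_simps)
qed simp

lemma poly_Kop_smult: "poly_Kop (smult c p) g = (\<lambda>x. c * poly_Kop p g x)"
  by (induction p) (simp_all add: poly_Kop_pCons Kop_add Kop_scale algebra_simps)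

lemma poly_Kop_mult: "poly_Kop (p * q) g = poly_Kop p (poly_Kop q g)"
  by (induction p) (simp_all add: poly_Kop_pCons poly_Kop_add poly_Kop_smult)

lemma poly_Kop_sum: "finite I \<Longrightarrow> poly_Kop (\<Sum>i\<in>I. P i) g = (\<lambda>x. \<Sum>i\<in>I. poly_Kop (P i) g x)"
  by (induction I rule: finite_induct) (simp_all add: poly_Kop_add)

lemma poly_Kop_monom: "poly_Kop (monom c k) g = (\<lambda>x. c * (Kop ^^ k) g x)"
  by (induction k) (simp_all add: poly_Kop_pCons Kop_zero Kop_scale monom_Suc monom_0)

lemma poly_Kop_diff_right: "poly_Kop p (\<lambda>x. f x - g x) = (\<lambda>x. poly_Kop p f x - poly_Kop p g x)"
  by (induction p) (simp_all add: poly_Kop_pCons Kop_diff algebra_simps)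

lemma poly_Kop_scale_right: "poly_Kop p (\<lambda>x. c * f x) = (\<lambda>x. c * poly_Kop p f x)"
  by (induction p) (simp_all add: poly_Kop_pCons Kop_scale algebra_simps)

lemma poly_Kop_add_right: "poly_Kop p (\<lambda>x. f x + g x) = (\<lambda>x. poly_Kop p f x + poly_Kop p g x)"
  by (induction p) (simp_all add: poly_Kop_pCons Kop_add algebra_simps)

lemma poly_Kop_zero_right: "poly_Kop p (\<lambda>x. 0) = (\<lambda>x. 0)"
  by (induction p) (simp_all add: poly_Kop_pCons Kop_zero)

lemma poly_Kop_sum_right:
  "finite R \<Longrightarrow> poly_Kop p (\<lambda>x. \<Sum>i\<in>R. F i x) = (\<lambda>x. \<Sum>i\<in>R. poly_Kop p (F i) x)"
  by (induction R rule: finite_induct) (simp_all add: poly_Kop_add_right poly_Kop_zero_right)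

lemma poly_Kop_eigenvector:
  assumes "\<And>x. x \<in> S \<Longrightarrow> Kop e x = r * e x" "x \<in> S"
  shows "poly_Kop p e x = poly p r * e x"
  using assms(2)
proof (induction p arbitrary: x)
  case (pCons a p)
  have "Kop (poly_Kop p e) = Kop (\<lambda>x. poly p r * e x)" by (rule Kop_cong) (use pCons in auto)
  also have "\<dots> = (\<lambda>x. poly p r * Kop e x)" by (rule Kop_scale)
  finally show ?case using pCons assms(1) by (simp add: poly_Kop_pCons algebra_simps)
qed simp

lemma poly_Kop_linear: "poly_Kop [:-r, 1:] f = (\<lambda>x. Kop f x - r * f x)"
  by (simp add: poly_Kop_pCons Kop_zero)

lemma poly_Kop_quadratic: "poly_Kop [:c0, c1, 1:] f = (\<lambda>x. c0 * f x + c1 * Kop f x + Kop (Kop f) x)"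
  by (simp add: poly_Kop_pCons Kop_zero Kop_add Kop_scale add.assoc)

lemma exists_annihilating_poly: "\<exists>p. p \<noteq> 0 \<and> (\<forall>x\<in>S. poly_Kop p f x = 0)"
proof -
  obtain c where c: "\<exists>i\<in>{..card S}. c i \<noteq> 0" "\<forall>x\<in>S. (\<Sum>i\<in>{..card S}. c i * (Kop ^^ i) f x) = 0"
    using exists_nontrivial_vanishing_combination[of S "{..card S}" "\<lambda>i. (Kop ^^ i) f"] finite_S by auto
  define p where "p = (\<Sum>i\<in>{..card S}. monom (c i) i)"
  have "coeff p k = (if k \<le> card S then c k else 0)" for k
    unfolding p_def by (simp add: coeff_sum coeff_monom)
  then have "p \<noteq> 0" using c(1) by (metis atMost_iff coeff_0)
  moreover have "poly_Kop p f = (\<lambda>x. \<Sum>i\<in>{..card S}. c i * (Kop ^^ i) f x)"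
    unfolding p_def by (simp add: poly_Kop_sum poly_Kop_monom)
  ultimately show ?thesis using c(2) by auto
qed

definition eigen_decomposition :: "('a \<Rightarrow> real) \<Rightarrow> real set \<Rightarrow> (real \<Rightarrow> 'a \<Rightarrow> real) \<Rightarrow> bool" where
  "eigen_decomposition f R e \<longleftrightarrow> finite R \<and> (\<forall>r\<in>R. \<forall>x\<in>S. Kop (e r) x = r * e r x)
     \<and> (\<forall>x\<in>S. f x = (\<Sum>r\<in>R. e r x))"

lemma eigen_decomposition_range_component_zero:
  assumes dec: "eigen_decomposition (poly_Kop [:-r, 1:] f) R e" and "r \<in> R" "x \<in> S"
  shows "e r x = 0"
proof -
  let ?g = "poly_Kop [:-r, 1:] f"
  have fin: "finite R" and eigen: "\<And>s x. s \<in> R \<Longrightarrow> x \<in> S \<Longrightarrow> Kop (e s) x = s * e s x"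
    and g_sum: "\<And>x. x \<in> S \<Longrightarrow> ?g x = (\<Sum>s\<in>R. e s x)"
    using dec unfolding eigen_decomposition_def by auto
  \<comment> \<open>\<open>\<langle>(K - r) f, e\<^sub>r\<rangle> = \<langle>f, (K - r) e\<^sub>r\<rangle> = 0\<close>, while orthogonality of the other components
    makes it \<open>\<parallel>e\<^sub>r\<parallel>\<^sup>2\<close>.\<close>
  have "pinner ?g (e r) = pinner (\<lambda>x. \<Sum>s\<in>R. e s x) (e r)"
    by (rule pinner_cong) (simp_all add: g_sum)
  also have "\<dots> = (\<Sum>s\<in>R. pinner (e s) (e r))"
    by (rule pinner_sum_left)
  also have "\<dots> = pinner (e r) (e r)"
    using assms(2) fin by (simp add: sum.remove sum.neutral pinner_eigenfamily_orthogonal[OF eigen])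
  finally have "pinner ?g (e r) = pinner (e r) (e r)" .
  moreover have "pinner ?g (e r) = pinner (Kop f) (e r) - r * pinner f (e r)"
    by (simp add: poly_Kop_linear pinner_def sum_subtractf sum_distrib_left algebra_simps)
  moreover have "pinner (Kop f) (e r) = pinner f (Kop (e r))" by (rule Kop_self_adjoint)
  moreover have "pinner f (Kop (e r)) = pinner f (\<lambda>x. r * e r x)"
    by (rule pinner_cong) (simp_all add: eigen assms(2))
  moreover have "pinner f (\<lambda>x. r * e r x) = r * pinner f (e r)"
    using pinner_scale[of 1 f r "e r"] by simp
  ultimately have "pinner (e r) (e r) = 0" by simp
  then show ?thesis using pinner_self_eq_0D assms(3) by blast
qed

lemma eigen_decomposition_solves_linear:
  assumes dec: "eigen_decomposition g R e" and r_zero: "\<And>x. r \<in> R \<Longrightarrow> x \<in> S \<Longrightarrow> e r x = 0"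
    and "x \<in> S"
  defines "u \<equiv> \<lambda>x. \<Sum>s\<in>R-{r}. (1 / (s - r)) * e s x"
  shows "Kop u x - r * u x = g x"
proof -
  have fin: "finite R" and eigen: "\<And>s x. s \<in> R \<Longrightarrow> x \<in> S \<Longrightarrow> Kop (e s) x = s * e s x"
    and g_sum: "\<And>x. x \<in> S \<Longrightarrow> g x = (\<Sum>s\<in>R. e s x)"
    using dec unfolding eigen_decomposition_def by auto
  have "Kop u x = (\<Sum>s\<in>R-{r}. (1 / (s - r)) * Kop (e s) x)"
    unfolding u_def by (simp only: Kop_sum Kop_scale)
  also have "\<dots> = (\<Sum>s\<in>R-{r}. (1 / (s - r)) * (s * e s x))"
    using \<open>x \<in> S\<close> eigen by (intro sum.cong refl) auto
  finally have "Kop u x - r * u x = (\<Sum>s\<in>R-{r}. (1 / (s - r)) * (s * e s x) - r * ((1 / (s - r)) * e s x))"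
    unfolding u_def by (simp add: sum_subtractf sum_distrib_left)
  also have "\<dots> = (\<Sum>s\<in>R-{r}. e s x)"
  proof (intro sum.cong refl)
    fix s assume "s \<in> R - {r}"
    then have "s - r \<noteq> 0" by simp
    have "(1 / (s - r)) * (s * e s x) - r * ((1 / (s - r)) * e s x) = (s - r) * e s x / (s - r)"
      by (simp add: algebra_simps diff_divide_distrib)
    then show "(1 / (s - r)) * (s * e s x) - r * ((1 / (s - r)) * e s x) = e s x"
      using \<open>s - r \<noteq> 0\<close> by simp
  qed
  also have "\<dots> = (\<Sum>s\<in>R. e s x)"
    using fin r_zero \<open>x \<in> S\<close> by (cases "r \<in> R") (simp_all add: sum.remove)
  finally show ?thesis using g_sum \<open>x \<in> S\<close> by simp
qed

lemma eigen_decomposition_linear_factor: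
  assumes dec: "eigen_decomposition (poly_Kop [:-r, 1:] f) R e"
  shows "\<exists>R e. eigen_decomposition f R e"
proof -
  have fin: "finite R" and eigen: "\<And>s x. s \<in> R \<Longrightarrow> x \<in> S \<Longrightarrow> Kop (e s) x = s * e s x"
    using dec unfolding eigen_decomposition_def by auto
  define u where "u = (\<lambda>x. \<Sum>s\<in>R-{r}. (1 / (s - r)) * e s x)"
  have Ku: "Kop u x - r * u x = Kop f x - r * f x" if "x \<in> S" for x
    using eigen_decomposition_solves_linear[OF dec eigen_decomposition_range_component_zero[OF dec] that]
    by (simp add: u_def poly_Kop_linear)
  \<comment> \<open>\<open>f - u\<close> is the missing \<open>r\<close>-component.\<close>
  define e' where "e' s = (if s = r then (\<lambda>x. f x - u x) else (\<lambda>x. (1 / (s - r)) * e s x))" for s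
  have "eigen_decomposition f (insert r R) e'"
    unfolding eigen_decomposition_def
  proof (intro conjI ballI)
    show "finite (insert r R)" using fin by simp
  next
    fix s x assume "s \<in> insert r R" "x \<in> S"
    then show "Kop (e' s) x = s * e' s x"
    proof (cases "s = r")
      case True
      then show ?thesis using Ku[OF \<open>x \<in> S\<close>] by (simp add: e'_def Kop_diff algebra_simps)
    next
      case False
      have "Kop (\<lambda>x. (1 / (s - r)) * e s x) x = (1 / (s - r)) * Kop (e s) x"
        by (simp only: Kop_scale)
      then show ?thesis using False eigen \<open>s \<in> insert r R\<close> \<open>x \<in> S\<close> by (simp add: e'_def)
    qed
  next
    fix x assume "x \<in> S"
    have "(\<Sum>s\<in>insert r R. e' s x) = e' r x + (\<Sum>s\<in>R-{r}. e' s x)"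
      using fin by (simp add: sum.insert_remove)
    also have "(\<Sum>s\<in>R-{r}. e' s x) = u x"
      unfolding u_def by (rule sum.cong) (auto simp: e'_def)
    finally show "f x = (\<Sum>s\<in>insert r R. e' s x)" by (simp add: e'_def)
  qed
  then show ?thesis by blast
qed

lemma poly_Kop_irreducible_quadratic_kernel:
  assumes "b \<noteq> 0" and zero: "\<And>x. x \<in> S \<Longrightarrow> poly_Kop [:a\<^sup>2 + b\<^sup>2, -2 * a, 1:] w x = 0" and "x \<in> S"
  shows "w x = 0"
proof -
  \<comment> \<open>\<open>\<langle>q(K) w, w\<rangle> = \<parallel>(K - a) w\<parallel>\<^sup>2 + b\<^sup>2 \<parallel>w\<parallel>\<^sup>2\<close> by self-adjointness.\<close>
  have "pinner (poly_Kop [:a\<^sup>2 + b\<^sup>2, -2 * a, 1:] w) w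
      = pinner (\<lambda>x. Kop w x - a * w x) (\<lambda>x. Kop w x - a * w x) + b\<^sup>2 * pinner w w"
    using Kop_self_adjoint[of "Kop w" w] pinner_commute[of w "Kop w"]
    by (simp add: poly_Kop_quadratic pinner_def sum.distrib sum_distrib_left
        algebra_simps sum_subtractf power2_eq_square)
  moreover have "pinner (poly_Kop [:a\<^sup>2 + b\<^sup>2, -2 * a, 1:] w) w = 0"
    unfolding pinner_def by (rule sum.neutral) (use zero in auto)
  ultimately have "b\<^sup>2 * pinner w w \<le> 0"
    using pinner_self_nonneg[of "\<lambda>x. Kop w x - a * w x"] by linarith
  then have "pinner w w = 0"
    using pinner_self_nonneg[of w] \<open>b \<noteq> 0\<close> by (simp add: mult_le_0_iff order_antisym)
  then show ?thesis using pinner_self_eq_0D \<open>x \<in> S\<close> by blast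
qed

lemma eigen_decomposition_quadratic_factor:
  assumes dec: "eigen_decomposition (poly_Kop [:a\<^sup>2 + b\<^sup>2, -2 * a, 1:] f) R e" and "b \<noteq> 0"
  shows "\<exists>R e. eigen_decomposition f R e"
proof -
  define q where "q = [:a\<^sup>2 + b\<^sup>2, -2 * a, 1:]"
  have fin: "finite R" and eigen: "\<And>s x. s \<in> R \<Longrightarrow> x \<in> S \<Longrightarrow> Kop (e s) x = s * e s x"
    and qf_sum: "\<And>x. x \<in> S \<Longrightarrow> poly_Kop q f x = (\<Sum>s\<in>R. e s x)"
    using dec unfolding eigen_decomposition_def q_def by auto
  \<comment> \<open>\<open>q\<close> has no real root, so \<open>q(K)\<close> is invertible on every eigenspace.\<close>
  have q_pos: "poly q s > 0" for s
  proof -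
    have "poly q s = (s - a)\<^sup>2 + b\<^sup>2" unfolding q_def by (simp add: power2_eq_square algebra_simps)
    then show ?thesis using \<open>b \<noteq> 0\<close> by (simp add: add_nonneg_pos)
  qed
  define e' where "e' s = (\<lambda>x. (1 / poly q s) * e s x)" for s
  have "poly_Kop q (\<lambda>x. \<Sum>s\<in>R. e' s x) x = poly_Kop q f x" if "x \<in> S" for x
  proof -
    have "poly_Kop q (\<lambda>x. \<Sum>s\<in>R. e' s x) x = (\<Sum>s\<in>R. (1 / poly q s) * poly_Kop q (e s) x)"
      by (simp only: e'_def poly_Kop_sum_right[OF fin] poly_Kop_scale_right)
    also have "\<dots> = (\<Sum>s\<in>R. e s x)"
    proof (intro sum.cong refl)
      fix s assume "s \<in> R"
      then have "poly_Kop q (e s) x = poly q s * e s x"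
        using that eigen by (intro poly_Kop_eigenvector) auto
      then show "(1 / poly q s) * poly_Kop q (e s) x = e s x" using q_pos[of s] by simp
    qed
    finally show ?thesis using qf_sum[OF that] by simp
  qed
  then have "f x = (\<Sum>s\<in>R. e' s x)" if "x \<in> S" for x
    using poly_Kop_irreducible_quadratic_kernel[OF \<open>b \<noteq> 0\<close>, where a = a and w = "\<lambda>x. f x - (\<Sum>s\<in>R. e' s x)"] that
    unfolding q_def by (simp add: poly_Kop_diff_right)
  moreover have "Kop (e' s) x = s * e' s x" if "s \<in> R" "x \<in> S" for s x
    unfolding e'_def Kop_scale using eigen that by simp
  ultimately have "eigen_decomposition f R e'"
    using fin unfolding eigen_decomposition_def by blast
  then show ?thesis by blast
qed

lemma eigen_decomposition_if_annihilated:
  "p \<noteq> 0 \<Longrightarrow> \<forall>x\<in>S. poly_Kop p f x = 0 \<Longrightarrow> \<exists>R e. eigen_decomposition f R e"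
proof (induction "degree p" arbitrary: p f rule: less_induct)
  case less
  show ?case
  proof (cases "degree p = 0")
    case True
    then obtain c where "p = [:c:]" "c \<noteq> 0" using less.prems by (metis degree_eq_zeroE pCons_0_0)
    then have "\<forall>x\<in>S. f x = 0"
      using less.prems(2) by (simp add: poly_Kop_pCons Kop_zero)
    then have "eigen_decomposition f {} e" for e unfolding eigen_decomposition_def by simp
    then show ?thesis by blast
  next
    case False
    \<comment> \<open>Split off a real irreducible factor \<open>g\<close> of \<open>p = g h\<close>; \<open>h\<close> annihilates \<open>g(K) f\<close>.\<close>
    have reduce: "\<exists>R e. eigen_decomposition (poly_Kop g f) R e" if p: "p = g * h" and "degree g > 0" for g h
    proof -
      have "h \<noteq> 0" using less.prems p by auto
      then have "degree h < degree p" using p \<open>degree g > 0\<close> less.prems by (simp add: degree_mult_eq)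
      moreover have "\<forall>x\<in>S. poly_Kop h (poly_Kop g f) x = 0"
        using less.prems(2) by (simp add: p mult.commute flip: poly_Kop_mult)
      ultimately show ?thesis using less.hyps \<open>h \<noteq> 0\<close> by blast
    qed
    from False have "degree p \<ge> 1" by simp
    from real_poly_linear_or_quadratic_factor[OF this] show ?thesis
    proof (elim disjE exE conjE)
      fix r h assume "p = [:-r, 1:] * h"
      from reduce[OF this] obtain R e where "eigen_decomposition (poly_Kop [:-r, 1:] f) R e" by auto
      then show ?thesis by (rule eigen_decomposition_linear_factor)
    next
      fix a b h assume "b \<noteq> 0" "p = [:a\<^sup>2 + b\<^sup>2, -2 * a, 1:] * h"
      from reduce[OF this(2)] obtain R e
        where "eigen_decomposition (poly_Kop [:a\<^sup>2 + b\<^sup>2, -2 * a, 1:] f) R e" by auto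
      then show ?thesis using \<open>b \<noteq> 0\<close> by (rule eigen_decomposition_quadratic_factor)
    qed
  qed
qed

lemma eigen_decomposition_exists: "\<exists>R e. eigen_decomposition f R e"
  using exists_annihilating_poly[of f] eigen_decomposition_if_annihilated by blast

end

section \<open>Lazy reversible chains\<close>

locale lazy_reversible_chain =
  fixes S :: "'a set" and K :: "'a \<Rightarrow> 'a \<Rightarrow> real" and \<pi> :: "'a \<Rightarrow> real" and \<mu> :: "'a \<Rightarrow> real"
    and c :: real
  assumes markov: "markov_kernel S K" and reversible: "reversible_chain S K \<pi>"
    and init: "prob_on S \<mu>" and c_gt: "c > 1/2" and lazy: "\<And>x. x \<in> S \<Longrightarrow> c \<le> K x x"
begin

lemma finite_S: "finite S"
  using markov unfolding markov_kernel_def by auto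

lemma K_nonneg: "x \<in> S \<Longrightarrow> y \<in> S \<Longrightarrow> 0 \<le> K x y"
  using markov unfolding markov_kernel_def by auto

lemma K_row_sum: "x \<in> S \<Longrightarrow> (\<Sum>y\<in>S. K x y) = 1"
  using markov unfolding markov_kernel_def by auto

lemma \<pi>_pos: "x \<in> S \<Longrightarrow> 0 < \<pi> x"
  using reversible unfolding reversible_chain_def by auto

lemma \<pi>_sum: "(\<Sum>x\<in>S. \<pi> x) = 1"
  using reversible unfolding reversible_chain_def prob_on_def by auto

lemma \<mu>_sum: "(\<Sum>x\<in>S. \<mu> x) = 1"
  using init unfolding prob_on_def by auto

sublocale reversible_kernel S K \<pi>
  using reversible by unfold_locales (auto simp: finite_S \<pi>_pos reversible_chain_def)

lemma \<pi>_stationary: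
  assumes "y \<in> S"
  shows "(\<Sum>x\<in>S. \<pi> x * K x y) = \<pi> y"
proof -
  have "(\<Sum>x\<in>S. \<pi> x * K x y) = (\<Sum>x\<in>S. \<pi> y * K y x)"
    using assms by (intro sum.cong refl) (simp add: detailed_balance)
  also have "\<dots> = \<pi> y" by (simp add: K_row_sum assms flip: sum_distrib_left)
  finally show ?thesis .
qed

lemma kpow_Suc_left:
  "x \<in> S \<Longrightarrow> y \<in> S \<Longrightarrow> kpow K S (Suc m) x y = (\<Sum>z\<in>S. K x z * kpow K S m z y)"
proof (induction m arbitrary: y)
  case 0
  then show ?case by (simp add: finite_S of_bool_def[symmetric])
next
  case (Suc m)
  have "kpow K S (Suc (Suc m)) x y = (\<Sum>z\<in>S. (\<Sum>w\<in>S. K x w * kpow K S m w z) * K z y)"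
    using Suc by simp
  also have "\<dots> = (\<Sum>z\<in>S. \<Sum>w\<in>S. K x w * (kpow K S m w z * K z y))"
    by (simp only: sum_distrib_right mult.assoc)
  also have "\<dots> = (\<Sum>w\<in>S. \<Sum>z\<in>S. K x w * (kpow K S m w z * K z y))"
    by (rule sum.swap)
  also have "\<dots> = (\<Sum>w\<in>S. K x w * kpow K S (Suc m) w y)"
    by (simp only: sum_distrib_left kpow.simps)
  finally show ?case .
qed

lemma kpow_nonneg: "x \<in> S \<Longrightarrow> y \<in> S \<Longrightarrow> 0 \<le> kpow K S m x y"
  by (induction m arbitrary: y) (auto intro!: sum_nonneg mult_nonneg_nonneg K_nonneg)

lemma kpow_row_sum: "x \<in> S \<Longrightarrow> (\<Sum>y\<in>S. kpow K S m x y) = 1"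
proof (induction m)
  case (Suc m)
  have "(\<Sum>y\<in>S. kpow K S (Suc m) x y) = (\<Sum>y\<in>S. \<Sum>z\<in>S. kpow K S m x z * K z y)"
    by simp
  also have "\<dots> = (\<Sum>z\<in>S. \<Sum>y\<in>S. kpow K S m x z * K z y)"
    by (rule sum.swap)
  also have "\<dots> = (\<Sum>z\<in>S. kpow K S m x z)"
    by (intro sum.cong refl) (simp add: K_row_sum flip: sum_distrib_left)
  finally show ?case using Suc by simp
qed (simp add: finite_S)

lemma kpow_le_1: "x \<in> S \<Longrightarrow> y \<in> S \<Longrightarrow> kpow K S m x y \<le> 1"
  using member_le_sum[of y S "kpow K S m x"] kpow_row_sum[of x m] by (simp add: finite_S kpow_nonneg)

lemma kpow_detailed_balance:
  "x \<in> S \<Longrightarrow> y \<in> S \<Longrightarrow> \<pi> x * kpow K S m x y = \<pi> y * kpow K S m y x"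
proof (induction m arbitrary: x y)
  case (Suc m)
  have "\<pi> x * kpow K S (Suc m) x y = (\<Sum>z\<in>S. (\<pi> x * kpow K S m x z) * K z y)"
    by (simp add: sum_distrib_left mult.assoc)
  also have "\<dots> = (\<Sum>z\<in>S. kpow K S m z x * (\<pi> z * K z y))"
    by (intro sum.cong refl) (simp add: Suc.IH Suc.prems algebra_simps)
  also have "\<dots> = (\<Sum>z\<in>S. kpow K S m z x * (\<pi> y * K y z))"
    by (intro sum.cong refl) (simp add: detailed_balance Suc.prems)
  also have "\<dots> = \<pi> y * (\<Sum>z\<in>S. K y z * kpow K S m z x)"
    by (simp add: sum_distrib_left algebra_simps)
  also have "\<dots> = \<pi> y * kpow K S (Suc m) y x"
    using Suc.prems by (simp add: kpow_Suc_left del: kpow.simps)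
  finally show ?case .
qed auto

lemma Kop_power_eq_kpow: "y \<in> S \<Longrightarrow> (Kop ^^ m) g y = (\<Sum>x\<in>S. kpow K S m y x * g x)"
proof (induction m arbitrary: g)
  case 0
  then show ?case by (simp add: finite_S of_bool_def[symmetric])
next
  case (Suc m)
  have "(Kop ^^ Suc m) g y = (Kop ^^ m) (Kop g) y"
    by (simp only: funpow_Suc_right comp_apply)
  also have "\<dots> = (\<Sum>x\<in>S. kpow K S m y x * Kop g x)"
    by (rule Suc.IH[OF Suc.prems])
  also have "\<dots> = (\<Sum>x\<in>S. \<Sum>z\<in>S. kpow K S m y x * K x z * g z)"
    by (simp add: Kop_def sum_distrib_left mult.assoc)
  also have "\<dots> = (\<Sum>z\<in>S. \<Sum>x\<in>S. kpow K S m y x * K x z * g z)"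
    by (rule sum.swap)
  also have "\<dots> = (\<Sum>z\<in>S. kpow K S (Suc m) y z * g z)"
    by (simp add: sum_distrib_right)
  finally show ?case .
qed

lemma Kop_power_eigenvector:
  assumes "\<And>x. x \<in> S \<Longrightarrow> Kop e x = r * e x" "y \<in> S"
  shows "(Kop ^^ m) e y = r ^ m * e y"
  using assms(2)
proof (induction m arbitrary: y)
  case (Suc m)
  have "Kop ((Kop ^^ m) e) = Kop (\<lambda>x. r ^ m * e x)" by (rule Kop_cong) (use Suc in auto)
  also have "\<dots> = (\<lambda>x. r ^ m * Kop e x)" by (rule Kop_scale)
  finally show ?case using Suc assms(1) by simp
qed simp

definition init_deviation :: "'a \<Rightarrow> real" where
  "init_deviation x = \<mu> x / \<pi> x - 1"

text \<open>By reversibility, the density of the law at time \<open>m\<close> evolves as \<open>K\<^sup>m (\<mu>/\<pi>)\<close>.\<close>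

lemma dist_disc_density:
  assumes "y \<in> S"
  shows "dist_disc S K \<mu> m y / \<pi> y - 1 = (Kop ^^ m) init_deviation y"
proof -
  have "dist_disc S K \<mu> m y / \<pi> y = (\<Sum>x\<in>S. kpow K S m y x * (\<mu> x / \<pi> x))"
    unfolding dist_disc_def sum_divide_distrib
  proof (intro sum.cong refl)
    fix x assume "x \<in> S"
    then show "\<mu> x * kpow K S m x y / \<pi> y = kpow K S m y x * (\<mu> x / \<pi> x)"
      using kpow_detailed_balance[of x y m] \<pi>_pos[of x] \<pi>_pos[OF assms] assms
      by (simp add: field_simps)
  qed
  also have "\<dots> = (\<Sum>x\<in>S. kpow K S m y x * init_deviation x + kpow K S m y x)"
    by (simp add: init_deviation_def algebra_simps)
  also have "\<dots> = (\<Sum>x\<in>S. kpow K S m y x * init_deviation x) + (\<Sum>x\<in>S. kpow K S m y x)"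
    by (rule sum.distrib)
  finally show ?thesis using assms by (simp add: Kop_power_eq_kpow kpow_row_sum)
qed

text \<open>Nonnegativity of this quadratic in \<open>s\<close> bounds the spectrum of \<open>K\<close>.\<close>

lemma edge_sum_square:
  "(\<Sum>x\<in>S. \<Sum>y\<in>S. \<pi> x * K x y * (g x + s * g y)\<^sup>2)
     = pinner g g + 2 * s * pinner (Kop g) g + s\<^sup>2 * pinner g g"
proof -
  have "(\<Sum>x\<in>S. \<Sum>y\<in>S. \<pi> x * K x y * (g x)\<^sup>2) = (\<Sum>x\<in>S. (\<Sum>y\<in>S. K x y) * (\<pi> x * (g x)\<^sup>2))"
    by (simp only: sum_distrib_right) (simp only: mult_ac)
  also have "\<dots> = pinner g g"
    by (simp add: pinner_def K_row_sum power2_eq_square mult_ac)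
  finally have diag: "(\<Sum>x\<in>S. \<Sum>y\<in>S. \<pi> x * K x y * (g x)\<^sup>2) = pinner g g" .
  have "(\<Sum>x\<in>S. \<Sum>y\<in>S. \<pi> x * K x y * (g y)\<^sup>2) = (\<Sum>y\<in>S. (\<Sum>x\<in>S. \<pi> x * K x y) * (g y)\<^sup>2)"
    by (simp only: sum_distrib_right) (rule sum.swap)
  also have "\<dots> = pinner g g"
    by (simp add: pinner_def \<pi>_stationary power2_eq_square mult_ac)
  finally have diag': "(\<Sum>x\<in>S. \<Sum>y\<in>S. \<pi> x * K x y * (g y)\<^sup>2) = pinner g g" .
  have cross: "(\<Sum>x\<in>S. \<Sum>y\<in>S. \<pi> x * K x y * (g x * g y)) = pinner (Kop g) g"
    by (simp add: pinner_def Kop_def sum_distrib_left sum_distrib_right mult_ac)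
  note diag diag' cross
  moreover have "(\<Sum>x\<in>S. \<Sum>y\<in>S. \<pi> x * K x y * (g x + s * g y)\<^sup>2)
      = (\<Sum>x\<in>S. \<Sum>y\<in>S. \<pi> x * K x y * (g x)\<^sup>2) + 2 * s * (\<Sum>x\<in>S. \<Sum>y\<in>S. \<pi> x * K x y * (g x * g y))
        + s\<^sup>2 * (\<Sum>x\<in>S. \<Sum>y\<in>S. \<pi> x * K x y * (g y)\<^sup>2)"
    by (simp add: power2_eq_square algebra_simps sum.distrib sum_distrib_left)
  ultimately show ?thesis by simp
qed

lemma Kop_quadratic_form_bounds:
  "(2 * c - 1) * pinner g g \<le> pinner (Kop g) g \<and> pinner (Kop g) g \<le> pinner g g"
proof -
  have nonneg: "0 \<le> (\<Sum>x\<in>S. \<Sum>y\<in>S. \<pi> x * K x y * (g x + s * g y)\<^sup>2)" for s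
    by (intro sum_nonneg mult_nonneg_nonneg) (auto simp: K_nonneg \<pi>_pos less_imp_le)
  \<comment> \<open>Laziness: the diagonal terms alone already give \<open>4 c \<langle>g, g\<rangle>\<close> at \<open>s = 1\<close>.\<close>
  have "4 * c * pinner g g = (\<Sum>x\<in>S. \<pi> x * c * (g x + 1 * g x)\<^sup>2)"
    by (simp add: pinner_def sum_distrib_left power2_eq_square algebra_simps)
  also have "\<dots> \<le> (\<Sum>x\<in>S. \<pi> x * K x x * (g x + 1 * g x)\<^sup>2)"
    using lazy \<pi>_pos by (intro sum_mono mult_right_mono mult_left_mono) (auto simp: less_imp_le)
  also have "\<dots> \<le> (\<Sum>x\<in>S. \<Sum>y\<in>S. \<pi> x * K x y * (g x + 1 * g y)\<^sup>2)"
    by (intro sum_mono member_le_sum) (auto simp: K_nonneg \<pi>_pos less_imp_le finite_S)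
  finally have "4 * c * pinner g g \<le> 2 * pinner g g + 2 * pinner (Kop g) g"
    using edge_sum_square[of g 1] by simp
  moreover have "0 \<le> 2 * pinner g g - 2 * pinner (Kop g) g"
    using nonneg[of "-1"] edge_sum_square[of g "-1"] by simp
  ultimately show ?thesis by (simp add: algebra_simps)
qed

lemma eigenvalue_bounds:
  assumes "\<And>x. x \<in> S \<Longrightarrow> Kop e x = r * e x" "0 < pinner e e"
  shows "2 * c - 1 \<le> r \<and> r \<le> 1"
proof -
  have "pinner (Kop e) e = pinner (\<lambda>x. r * e x) e" by (rule pinner_cong) (simp_all add: assms)
  also have "\<dots> = r * pinner e e" using pinner_scale[of r e 1 e] by simp
  finally show ?thesis
    using Kop_quadratic_form_bounds[of e] assms(2) by (simp add: mult_le_cancel_right)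
qed

lemma heat_kernel_sums:
  assumes "x \<in> S" "y \<in> S"
  shows "(\<lambda>k. exp (- t) * t ^ k / fact k * kpow K S k x y) sums heat_kernel S K t x y"
proof -
  have "summable (\<lambda>k. exp (- t) * (\<bar>t\<bar> ^ k / fact k))"
    using exp_converges[of "\<bar>t\<bar>"] by (intro summable_mult sums_summable) (auto simp: field_simps)
  moreover have "norm (exp (- t) * t ^ k / fact k * kpow K S k x y) \<le> exp (- t) * (\<bar>t\<bar> ^ k / fact k)" for k
  proof -
    have "norm (exp (- t) * t ^ k / fact k * kpow K S k x y) = exp (- t) * (\<bar>t\<bar> ^ k / fact k) * kpow K S k x y"
      using kpow_nonneg[OF assms, of k] by (simp add: abs_mult power_abs)
    also have "\<dots> \<le> exp (- t) * (\<bar>t\<bar> ^ k / fact k)"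
      using kpow_le_1[OF assms, of k] by (intro mult_left_le) auto
    finally show ?thesis .
  qed
  ultimately have "summable (\<lambda>k. exp (- t) * t ^ k / fact k * kpow K S k x y)"
    by (rule summable_comparison_test')
  then show ?thesis unfolding heat_kernel_def by (rule summable_sums)
qed

lemma dist_cont_sums:
  assumes "y \<in> S"
  shows "(\<lambda>k. exp (- t) * t ^ k / fact k * dist_disc S K \<mu> k y) sums dist_cont S K \<mu> t y"
proof -
  have "(\<lambda>k. \<Sum>x\<in>S. \<mu> x * (exp (- t) * t ^ k / fact k * kpow K S k x y)) sums dist_cont S K \<mu> t y"
    unfolding dist_cont_def using assms by (intro sums_sum sums_mult heat_kernel_sums)
  then show ?thesis by (simp add: dist_disc_def sum_distrib_left algebra_simps)
qed

end

section \<open>Spectral representation of the \<open>L\<^sup>2\<close> distances\<close>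

definition exp_sum :: "'i set \<Rightarrow> ('i \<Rightarrow> real) \<Rightarrow> ('i \<Rightarrow> real) \<Rightarrow> real \<Rightarrow> real" where
  "exp_sum I w \<rho> u = (\<Sum>i\<in>I. w i * exp (- (\<rho> i * u)))"

context lazy_reversible_chain
begin

lemma eigen_decomposition_init_deviation:
  "\<exists>R e. eigen_decomposition init_deviation R e \<and> R \<subseteq> {2 * c - 1..1}"
proof -
  obtain R0 e where dec: "eigen_decomposition init_deviation R0 e"
    using eigen_decomposition_exists by blast
  \<comment> \<open>Drop the vanishing components; the others are genuine eigenvectors.\<close>
  define R where "R = {r\<in>R0. 0 < pinner (e r) (e r)}"
  have "finite R0" and eigen: "\<And>r x. r \<in> R0 \<Longrightarrow> x \<in> S \<Longrightarrow> Kop (e r) x = r * e r x"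
    and sum_R0: "\<And>x. x \<in> S \<Longrightarrow> init_deviation x = (\<Sum>r\<in>R0. e r x)"
    using dec unfolding eigen_decomposition_def by auto
  have "e r x = 0" if "r \<in> R0 - R" "x \<in> S" for r x
    using that pinner_self_nonneg[of "e r"] pinner_self_eq_0D[of "e r" x] unfolding R_def by auto
  then have "init_deviation x = (\<Sum>r\<in>R. e r x)" if "x \<in> S" for x
    using sum_R0[OF that] sum.mono_neutral_right[OF \<open>finite R0\<close>, of R "\<lambda>r. e r x"] that
    unfolding R_def by auto
  moreover have "R \<subseteq> {2 * c - 1..1}"
    using eigenvalue_bounds eigen unfolding R_def by fastforce
  ultimately have "eigen_decomposition init_deviation R e \<and> R \<subseteq> {2 * c - 1..1}"
    using \<open>finite R0\<close> eigen unfolding eigen_decomposition_def R_def by auto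
  then show ?thesis by blast
qed

lemma dist_disc_eigen_expansion:
  assumes dec: "eigen_decomposition init_deviation R e" and "y \<in> S"
  shows "dist_disc S K \<mu> m y = \<pi> y * (1 + (\<Sum>r\<in>R. r ^ m * e r y))"
proof -
  have eigen: "\<And>r x. r \<in> R \<Longrightarrow> x \<in> S \<Longrightarrow> Kop (e r) x = r * e r x"
    and sum_R: "\<And>x. x \<in> S \<Longrightarrow> init_deviation x = (\<Sum>r\<in>R. e r x)"
    using dec unfolding eigen_decomposition_def by auto
  have "(Kop ^^ m) init_deviation y = (\<Sum>x\<in>S. \<Sum>r\<in>R. kpow K S m y x * e r x)"
    using assms(2) by (simp add: Kop_power_eq_kpow sum_R sum_distrib_left)
  also have "\<dots> = (\<Sum>r\<in>R. \<Sum>x\<in>S. kpow K S m y x * e r x)"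
    by (rule sum.swap)
  also have "\<dots> = (\<Sum>r\<in>R. r ^ m * e r y)"
    using assms(2) eigen
    by (intro sum.cong refl) (simp add: Kop_power_eigenvector flip: Kop_power_eq_kpow)
  finally show ?thesis
    using dist_disc_density[OF assms(2), of m] \<pi>_pos[OF assms(2)] by (simp add: field_simps)
qed

text \<open>Summing the Poisson mixture of the discrete expansion termwise turns \<open>r\<^sup>k\<close> into
  \<open>e\<^sup>-\<^sup>t e\<^sup>t\<^sup>r\<close>.\<close>

lemma dist_cont_eigen_expansion:
  assumes dec: "eigen_decomposition init_deviation R e" and "y \<in> S"
  shows "dist_cont S K \<mu> t y = \<pi> y * (1 + (\<Sum>r\<in>R. exp (- t) * exp (t * r) * e r y))"
proof -
  have exp_sums: "(\<lambda>k. x ^ k / fact k) sums exp x" for x :: real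
    using exp_converges[of x] by (simp add: divide_inverse mult.commute)
  have "(\<lambda>k. \<pi> y * (exp (- t) * (t ^ k / fact k) + (\<Sum>r\<in>R. (exp (- t) * e r y) * ((t * r) ^ k / fact k))))
      sums (\<pi> y * (exp (- t) * exp t + (\<Sum>r\<in>R. (exp (- t) * e r y) * exp (t * r))))"
    by (intro sums_mult sums_add sums_sum exp_sums)
  moreover have "\<pi> y * (exp (- t) * (t ^ k / fact k) + (\<Sum>r\<in>R. (exp (- t) * e r y) * ((t * r) ^ k / fact k)))
      = exp (- t) * t ^ k / fact k * dist_disc S K \<mu> k y" for k
    by (simp add: dist_disc_eigen_expansion[OF assms] sum_distrib_left sum_divide_distrib
        power_mult_distrib algebra_simps)
  ultimately have "(\<lambda>k. exp (- t) * t ^ k / fact k * dist_disc S K \<mu> k y)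
      sums (\<pi> y * (exp (- t) * exp t + (\<Sum>r\<in>R. (exp (- t) * e r y) * exp (t * r))))"
    by simp
  from sums_unique2[OF dist_cont_sums[OF assms(2)] this] show ?thesis
    by (simp add: exp_minus_inverse algebra_simps)
qed

lemma l2dist_eq_pinner: "l2dist S \<pi> \<nu> = sqrt (pinner (\<lambda>y. \<nu> y / \<pi> y - 1) (\<lambda>y. \<nu> y / \<pi> y - 1))"
  unfolding l2dist_def pinner_def by (simp add: power2_eq_square)

lemma d2_disc_0: "d2_disc S K \<pi> \<mu> 0 = sqrt ((\<Sum>y\<in>S. (\<mu> y)\<^sup>2 / \<pi> y) - 1)"
proof -
  have "(\<Sum>y\<in>S. \<bar>dist_disc S K \<mu> 0 y / \<pi> y - 1\<bar>\<^sup>2 * \<pi> y) = (\<Sum>y\<in>S. (\<mu> y)\<^sup>2 / \<pi> y - 2 * \<mu> y + \<pi> y)"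
  proof (intro sum.cong refl)
    fix y assume "y \<in> S"
    moreover have "dist_disc S K \<mu> 0 y = \<mu> y"
      using \<open>y \<in> S\<close> finite_S by (simp add: dist_disc_def of_bool_def[symmetric])
    ultimately show "\<bar>dist_disc S K \<mu> 0 y / \<pi> y - 1\<bar>\<^sup>2 * \<pi> y = (\<mu> y)\<^sup>2 / \<pi> y - 2 * \<mu> y + \<pi> y"
      using \<pi>_pos[of y] by (simp add: power2_eq_square field_simps)
  qed
  also have "\<dots> = (\<Sum>y\<in>S. (\<mu> y)\<^sup>2 / \<pi> y) - 1"
    by (simp add: sum.distrib sum_subtractf \<mu>_sum \<pi>_sum flip: sum_distrib_left)
  finally show ?thesis unfolding d2_disc_def l2dist_def by simp
qed

lemma d2_disc_eigen_expansion:
  assumes dec: "eigen_decomposition init_deviation R e"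
  shows "d2_disc S K \<pi> \<mu> m = sqrt (\<Sum>r\<in>R. (r ^ m)\<^sup>2 * pinner (e r) (e r))"
proof -
  have "finite R" and eigen: "\<And>r x. r \<in> R \<Longrightarrow> x \<in> S \<Longrightarrow> Kop (e r) x = r * e r x"
    using dec unfolding eigen_decomposition_def by auto
  have "d2_disc S K \<pi> \<mu> m = sqrt (pinner (\<lambda>y. \<Sum>r\<in>R. r ^ m * e r y) (\<lambda>y. \<Sum>r\<in>R. r ^ m * e r y))"
    unfolding d2_disc_def l2dist_eq_pinner
    by (intro arg_cong[of _ _ sqrt] pinner_cong) (auto simp: dist_disc_eigen_expansion[OF dec] dest: \<pi>_pos)
  then show ?thesis by (simp only: pinner_orthogonal_sum[OF \<open>finite R\<close> eigen])
qed

lemma d2_cont_eigen_expansion: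
  assumes dec: "eigen_decomposition init_deviation R e"
  shows "d2_cont S K \<pi> \<mu> t = sqrt (\<Sum>r\<in>R. (exp (- t) * exp (t * r))\<^sup>2 * pinner (e r) (e r))"
proof -
  have "finite R" and eigen: "\<And>r x. r \<in> R \<Longrightarrow> x \<in> S \<Longrightarrow> Kop (e r) x = r * e r x"
    using dec unfolding eigen_decomposition_def by auto
  have "d2_cont S K \<pi> \<mu> t
      = sqrt (pinner (\<lambda>y. \<Sum>r\<in>R. exp (- t) * exp (t * r) * e r y) (\<lambda>y. \<Sum>r\<in>R. exp (- t) * exp (t * r) * e r y))"
    unfolding d2_cont_def l2dist_eq_pinner
    by (intro arg_cong[of _ _ sqrt] pinner_cong) (auto simp: dist_cont_eigen_expansion[OF dec] dest: \<pi>_pos)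
  then show ?thesis by (simp only: pinner_orthogonal_sum[OF \<open>finite R\<close> eigen])
qed

text \<open>Both distances are Laplace transforms of the same spectral measure \<open>w r = \<parallel>e\<^sub>r\<parallel>\<^sup>2\<close>:
  in discrete time with rates \<open>-2 ln r\<close> (as \<open>r\<^sup>2\<^sup>m = exp (2 m ln r)\<close>), in continuous time with
  rates \<open>2 (1 - r)\<close>.\<close>

lemma d2_spectral_representation:
  "\<exists>R w. finite R \<and> (\<forall>r\<in>R. 2 * c - 1 \<le> r \<and> r \<le> 1 \<and> 0 \<le> w r)
     \<and> (\<forall>m. d2_disc S K \<pi> \<mu> m = sqrt (exp_sum R w (\<lambda>r. -2 * ln r) (real m)))
     \<and> (\<forall>t. d2_cont S K \<pi> \<mu> t = sqrt (exp_sum R w (\<lambda>r. 2 * (1 - r)) t))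
     \<and> (\<Sum>r\<in>R. w r) = (\<Sum>y\<in>S. (\<mu> y)\<^sup>2 / \<pi> y) - 1"
proof -
  obtain R e where dec: "eigen_decomposition init_deviation R e" and R: "R \<subseteq> {2 * c - 1..1}"
    using eigen_decomposition_init_deviation by blast
  define w where "w r = pinner (e r) (e r)" for r
  have "(r ^ m)\<^sup>2 = exp (- (-2 * ln r * real m))" if "r \<in> R" for r m
  proof -
    have "0 < r" using R that c_gt by auto
    then have "exp (- (-2 * ln r * real m)) = r powr real (2 * m)"
      by (simp add: powr_def algebra_simps)
    also have "\<dots> = (r ^ m)\<^sup>2"
      using \<open>0 < r\<close> by (simp only: powr_realpow) (simp add: power_mult[symmetric] mult.commute)
    finally show ?thesis ..
  qed
  then have disc: "d2_disc S K \<pi> \<mu> m = sqrt (exp_sum R w (\<lambda>r. -2 * ln r) (real m))" for m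
    unfolding d2_disc_eigen_expansion[OF dec] exp_sum_def w_def
    by (intro arg_cong[of _ _ sqrt] sum.cong refl) (simp add: mult.commute)
  have cont: "d2_cont S K \<pi> \<mu> t = sqrt (exp_sum R w (\<lambda>r. 2 * (1 - r)) t)" for t
    unfolding d2_cont_eigen_expansion[OF dec] exp_sum_def w_def
    by (intro arg_cong[of _ _ sqrt] sum.cong refl) (simp add: power2_eq_square algebra_simps flip: exp_add)
  have "(\<Sum>r\<in>R. w r) = (\<Sum>y\<in>S. (\<mu> y)\<^sup>2 / \<pi> y) - 1"
    using disc[of 0] d2_disc_0 by (simp add: exp_sum_def)
  moreover have "\<forall>r\<in>R. 2 * c - 1 \<le> r \<and> r \<le> 1 \<and> 0 \<le> w r"
    using R by (auto simp: w_def pinner_self_nonneg)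
  moreover have "finite R" using dec unfolding eigen_decomposition_def by auto
  ultimately show ?thesis using disc cont by blast
qed

end

section \<open>Cutoff for exponential sums\<close>

definition cutoff :: "(nat \<Rightarrow> real \<Rightarrow> real) \<Rightarrow> (nat \<Rightarrow> real) \<Rightarrow> bool" where
  "cutoff G t \<longleftrightarrow> (\<forall>n. 0 < t n) \<and> (\<forall>a. 0 < a \<and> a < 1 \<longrightarrow>
      ((\<lambda>n. G n ((1 + a) * t n)) \<longlonglongrightarrow> 0) \<and> filterlim (\<lambda>n. G n ((1 - a) * t n)) at_top sequentially)"

definition discrete_cutoff :: "(nat \<Rightarrow> nat \<Rightarrow> real) \<Rightarrow> (nat \<Rightarrow> real) \<Rightarrow> bool" where
  "discrete_cutoff G t \<longleftrightarrow> (\<forall>n. 0 < t n) \<and> (\<forall>a. 0 < a \<and> a < 1 \<longrightarrow>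
      ((\<lambda>n. G n (nat \<lceil>(1 + a) * t n\<rceil>)) \<longlonglongrightarrow> 0) \<and>
      filterlim (\<lambda>n. G n (nat \<lfloor>(1 - a) * t n\<rfloor>)) at_top sequentially)"

lemma cutoffD:
  assumes "cutoff G t"
  shows "0 < t n"
    and "0 < a \<Longrightarrow> a < 1 \<Longrightarrow> (\<lambda>n. G n ((1 + a) * t n)) \<longlonglongrightarrow> 0"
    and "0 < a \<Longrightarrow> a < 1 \<Longrightarrow> filterlim (\<lambda>n. G n ((1 - a) * t n)) at_top sequentially"
  using assms unfolding cutoff_def by auto

lemma discrete_cutoffD:
  assumes "discrete_cutoff G t"
  shows "0 < t n"
    and "0 < a \<Longrightarrow> a < 1 \<Longrightarrow> (\<lambda>n. G n (nat \<lceil>(1 + a) * t n\<rceil>)) \<longlonglongrightarrow> 0"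
    and "0 < a \<Longrightarrow> a < 1 \<Longrightarrow> filterlim (\<lambda>n. G n (nat \<lfloor>(1 - a) * t n\<rfloor>)) at_top sequentially"
  using assms unfolding discrete_cutoff_def by auto

lemma L2_cutoff_cont_iff: "L2_cutoff_cont S K \<pi> \<mu> \<longleftrightarrow> (\<exists>t. cutoff (\<lambda>n. d2_cont (S n) (K n) (\<pi> n) (\<mu> n)) t)"
  unfolding L2_cutoff_cont_def cutoff_def ..

lemma L2_cutoff_disc_iff:
  "L2_cutoff_disc S K \<pi> \<mu> \<longleftrightarrow> (\<exists>t. discrete_cutoff (\<lambda>n. d2_disc (S n) (K n) (\<pi> n) (\<mu> n)) t)"
  unfolding L2_cutoff_disc_def discrete_cutoff_def ..

lemma tendsto_0_sqrt_iff:
  fixes X :: "nat \<Rightarrow> real"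
  assumes "\<And>n. 0 \<le> X n"
  shows "((\<lambda>n. sqrt (X n)) \<longlonglongrightarrow> 0) \<longleftrightarrow> (X \<longlonglongrightarrow> 0)"
proof
  assume "(\<lambda>n. sqrt (X n)) \<longlonglongrightarrow> 0"
  then have "(\<lambda>n. (sqrt (X n))\<^sup>2) \<longlonglongrightarrow> 0\<^sup>2" by (rule tendsto_power)
  then show "X \<longlonglongrightarrow> 0" using assms by simp
qed (use tendsto_real_sqrt in fastforce)

lemma filterlim_at_top_sqrt_iff:
  fixes X :: "nat \<Rightarrow> real"
  assumes "\<And>n. 0 \<le> X n"
  shows "filterlim (\<lambda>n. sqrt (X n)) at_top sequentially \<longleftrightarrow> filterlim X at_top sequentially"
proof
  assume "filterlim (\<lambda>n. sqrt (X n)) at_top sequentially"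
  then have "filterlim (\<lambda>n. (sqrt (X n))\<^sup>2) at_top sequentially" by (intro filterlim_pow_at_top) simp_all
  then show "filterlim X at_top sequentially" using assms by simp
qed (rule filterlim_compose[OF sqrt_at_top])

lemma cutoff_sqrt: "(\<And>n u. 0 \<le> G n u) \<Longrightarrow> cutoff (\<lambda>n u. sqrt (G n u)) = cutoff G"
  unfolding cutoff_def fun_eq_iff by (simp add: tendsto_0_sqrt_iff filterlim_at_top_sqrt_iff)

lemma discrete_cutoff_sqrt:
  "(\<And>n m. 0 \<le> G n m) \<Longrightarrow> discrete_cutoff (\<lambda>n m. sqrt (G n m)) = discrete_cutoff G"
  unfolding discrete_cutoff_def fun_eq_iff by (simp add: tendsto_0_sqrt_iff filterlim_at_top_sqrt_iff)

lemma discrete_cutoff_times_at_top: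
  fixes G :: "nat \<Rightarrow> real \<Rightarrow> real"
  assumes large: "\<And>B. \<forall>\<^sub>F n in sequentially. \<forall>u. 0 \<le> u \<and> u \<le> B \<longrightarrow> 1 \<le> G n u"
    and disc: "discrete_cutoff (\<lambda>n m. G n (real m)) t"
  shows "filterlim t at_top sequentially"
  unfolding filterlim_at_top_dense
proof
  fix Z :: real
  have "(\<lambda>n. G n (real (nat \<lceil>(1 + 1/2) * t n\<rceil>))) \<longlonglongrightarrow> 0"
    by (rule discrete_cutoffD(2)[OF disc]) simp_all
  then have "\<forall>\<^sub>F n in sequentially. G n (real (nat \<lceil>(1 + 1/2) * t n\<rceil>)) < 1"
    by (rule order_tendstoD(2)) simp
  with large[of "3/2 * Z + 1"] show "\<forall>\<^sub>F n in sequentially. Z < t n"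
  proof eventually_elim
    case (elim n)
    then have "3/2 * Z + 1 < real (nat \<lceil>(1 + 1/2) * t n\<rceil>)"
      by (metis not_le of_nat_0_le_iff)
    moreover have "real (nat \<lceil>(1 + 1/2) * t n\<rceil>) \<le> 3/2 * t n + 1"
      using discrete_cutoffD(1)[OF disc, of n] by (simp add: of_nat_nat)
    ultimately show ?case by simp
  qed
qed

text \<open>Sampling at integer times: rounding moves the time by at most 1, which is negligible
  against cutoff times tending to infinity.\<close>

lemma discrete_cutoff_of_cutoff:
  assumes anti: "\<And>n u v. u \<le> v \<Longrightarrow> G n v \<le> G n u" and nonneg: "\<And>n u. 0 \<le> G n u"
    and cut: "cutoff G t"
  shows "discrete_cutoff (\<lambda>n m. G n (real m)) t"
  unfolding discrete_cutoff_def
proof (intro conjI allI impI)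
  fix a :: real assume a: "0 < a \<and> a < 1"
  have t: "0 < t n" for n using cut unfolding cutoff_def by blast
  have up: "(\<lambda>n. G n ((1 + a) * t n)) \<longlonglongrightarrow> 0"
    and down: "filterlim (\<lambda>n. G n ((1 - a) * t n)) at_top sequentially"
    using cut a unfolding cutoff_def by blast+
  show "(\<lambda>n. G n (real (nat \<lceil>(1 + a) * t n\<rceil>))) \<longlonglongrightarrow> 0"
  proof (rule tendsto_sandwich[OF _ _ tendsto_const up])
    show "\<forall>\<^sub>F n in sequentially. 0 \<le> G n (real (nat \<lceil>(1 + a) * t n\<rceil>))"
      by (simp add: nonneg)
    show "\<forall>\<^sub>F n in sequentially. G n (real (nat \<lceil>(1 + a) * t n\<rceil>)) \<le> G n ((1 + a) * t n)"
      by (intro always_eventually allI anti real_nat_ceiling_ge)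
  qed
  have "G n ((1 - a) * t n) \<le> G n (real (nat \<lfloor>(1 - a) * t n\<rfloor>))" for n
    using a t[of n] by (intro anti) (simp add: of_nat_nat)
  then show "filterlim (\<lambda>n. G n (real (nat \<lfloor>(1 - a) * t n\<rfloor>))) at_top sequentially"
    by (intro filterlim_at_top_mono[OF down] always_eventually) auto
qed (use cut in \<open>simp add: cutoff_def\<close>)

lemma cutoff_of_discrete_cutoff:
  assumes anti: "\<And>n u v. u \<le> v \<Longrightarrow> G n v \<le> G n u" and nonneg: "\<And>n u. 0 \<le> G n u"
    and disc: "discrete_cutoff (\<lambda>n m. G n (real m)) t" and t_lim: "filterlim t at_top sequentially"
  shows "cutoff G t"
  unfolding cutoff_def
proof (intro conjI allI impI)
  have t: "0 < t n" for n using disc unfolding discrete_cutoff_def by blast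
  then show "0 < t n" for n .
  fix a :: real assume a: "0 < a \<and> a < 1"
  then have up: "(\<lambda>n. G n (real (nat \<lceil>(1 + a/2) * t n\<rceil>))) \<longlonglongrightarrow> 0"
    and down: "filterlim (\<lambda>n. G n (real (nat \<lfloor>(1 - a/2) * t n\<rfloor>))) at_top sequentially"
    using disc unfolding discrete_cutoff_def by auto
  \<comment> \<open>Once \<open>a t > 2\<close>, the rounded times \<open>(1 \<plusminus> a/2) t\<close> lie between \<open>t\<close> and \<open>(1 \<plusminus> a) t\<close>.\<close>
  have "\<forall>\<^sub>F n in sequentially. 2 / a < t n"
    using t_lim by (simp add: filterlim_at_top_dense)
  then have large: "\<forall>\<^sub>F n in sequentially. 2 < a * t n"
    by (rule eventually_mono) (use a in \<open>simp add: field_simps\<close>)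
  show "(\<lambda>n. G n ((1 + a) * t n)) \<longlonglongrightarrow> 0"
  proof (rule tendsto_sandwich[OF _ _ tendsto_const up])
    show "\<forall>\<^sub>F n in sequentially. 0 \<le> G n ((1 + a) * t n)"
      by (simp add: nonneg)
    show "\<forall>\<^sub>F n in sequentially. G n ((1 + a) * t n) \<le> G n (real (nat \<lceil>(1 + a/2) * t n\<rceil>))"
      using large
    proof (rule eventually_mono)
      fix n assume "2 < a * t n"
      have "real (nat \<lceil>(1 + a/2) * t n\<rceil>) \<le> (1 + a/2) * t n + 1"
        using a t[of n] by (simp add: of_nat_nat)
      also have "\<dots> \<le> (1 + a) * t n"
        using \<open>2 < a * t n\<close> by (simp add: algebra_simps)
      finally show "G n ((1 + a) * t n) \<le> G n (real (nat \<lceil>(1 + a/2) * t n\<rceil>))" by (rule anti)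
    qed
  qed
  show "filterlim (\<lambda>n. G n ((1 - a) * t n)) at_top sequentially"
  proof (rule filterlim_at_top_mono[OF down])
    show "\<forall>\<^sub>F n in sequentially. G n (real (nat \<lfloor>(1 - a/2) * t n\<rfloor>)) \<le> G n ((1 - a) * t n)"
      using large
    proof (rule eventually_mono)
      fix n assume "2 < a * t n"
      then have "(1 - a) * t n \<le> (1 - a/2) * t n - 1"
        by (simp add: algebra_simps)
      also have "\<dots> \<le> real (nat \<lfloor>(1 - a/2) * t n\<rfloor>)"
        using a t[of n] real_of_int_floor_gt_diff_one[of "(1 - a/2) * t n"] by (simp add: of_nat_nat)
      finally show "G n (real (nat \<lfloor>(1 - a/2) * t n\<rfloor>)) \<le> G n ((1 - a) * t n)" by (rule anti)
    qed
  qed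
qed

lemma exp_sum_nonneg: "(\<And>i. i \<in> I \<Longrightarrow> 0 \<le> w i) \<Longrightarrow> 0 \<le> exp_sum I w \<rho> u"
  unfolding exp_sum_def by (intro sum_nonneg mult_nonneg_nonneg) auto

lemma exp_sum_mono_rates:
  assumes "\<And>i. i \<in> I \<Longrightarrow> 0 \<le> w i" "\<And>i. i \<in> I \<Longrightarrow> \<sigma> i * v \<le> \<rho> i * u"
  shows "exp_sum I w \<rho> u \<le> exp_sum I w \<sigma> v"
  unfolding exp_sum_def using assms by (intro sum_mono mult_left_mono) auto

lemma exp_sum_antimono:
  assumes "\<And>i. i \<in> I \<Longrightarrow> 0 \<le> w i" "\<And>i. i \<in> I \<Longrightarrow> 0 \<le> \<rho> i" "u \<le> v"
  shows "exp_sum I w \<rho> v \<le> exp_sum I w \<rho> u"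
  using assms by (intro exp_sum_mono_rates) (auto intro: mult_left_mono)

lemma exp_sum_ge_total_weight:
  assumes "\<And>i. i \<in> I \<Longrightarrow> 0 \<le> w i" "\<And>i. i \<in> I \<Longrightarrow> \<rho> i \<le> L" "0 \<le> L" "0 \<le> u" "u \<le> B"
  shows "exp (- (L * B)) * (\<Sum>i\<in>I. w i) \<le> exp_sum I w \<rho> u"
  unfolding exp_sum_def sum_distrib_left
proof (intro sum_mono)
  fix i assume "i \<in> I"
  have "\<rho> i * u \<le> L * B" using assms \<open>i \<in> I\<close> by (intro mult_mono) auto
  then show "exp (- (L * B)) * w i \<le> w i * exp (- (\<rho> i * u))"
    using assms(1)[OF \<open>i \<in> I\<close>] by (simp add: mult.commute mult_left_mono)
qed

text \<open>The weight of the modes that are slow at time scale \<open>u\<close>, i.e.\ have not decayed by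
  the factor \<open>exp (-M)\<close> at time \<open>u\<close>.\<close>

definition slow_weight :: "'i set \<Rightarrow> ('i \<Rightarrow> real) \<Rightarrow> ('i \<Rightarrow> real) \<Rightarrow> real \<Rightarrow> real \<Rightarrow> real" where
  "slow_weight I w \<rho> u M = (\<Sum>i\<in>{i\<in>I. \<rho> i * u < M}. w i)"

lemma slow_weight_nonneg: "(\<And>i. i \<in> I \<Longrightarrow> 0 \<le> w i) \<Longrightarrow> 0 \<le> slow_weight I w \<rho> u M"
  unfolding slow_weight_def by (intro sum_nonneg) auto

lemma slow_weight_mono_rates:
  assumes "finite I" "\<And>i. i \<in> I \<Longrightarrow> 0 \<le> w i" "0 < k" "\<And>i. i \<in> I \<Longrightarrow> \<rho> i * u \<le> k * (\<sigma> i * v)"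
  shows "slow_weight I w \<sigma> v M \<le> slow_weight I w \<rho> u (k * M)"
  unfolding slow_weight_def
proof (rule sum_mono2)
  show "{i \<in> I. \<sigma> i * v < M} \<subseteq> {i \<in> I. \<rho> i * u < k * M}"
  proof safe
    fix i assume "i \<in> I" "\<sigma> i * v < M"
    then show "\<rho> i * u < k * M"
      using assms(4)[of i] assms(3) mult_strict_left_mono[of "\<sigma> i * v" M k] by linarith
  qed
qed (use assms in auto)

lemma slow_weight_le_exp_sum:
  assumes "finite I" "\<And>i. i \<in> I \<Longrightarrow> 0 \<le> w i" "0 \<le> b"
  shows "slow_weight I w \<rho> u M \<le> exp (b * M) * exp_sum I w \<rho> (b * u)"
proof -
  have "slow_weight I w \<rho> u M \<le> (\<Sum>i\<in>{i\<in>I. \<rho> i * u < M}. exp (b * M) * (w i * exp (- (\<rho> i * (b * u)))))"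
    unfolding slow_weight_def
  proof (rule sum_mono)
    fix i assume i: "i \<in> {i\<in>I. \<rho> i * u < M}"
    then have "\<rho> i * (b * u) \<le> b * M"
      using assms(3) by (simp add: mult.left_commute mult_left_mono)
    then have "1 \<le> exp (b * M) * exp (- (\<rho> i * (b * u)))"
      by (simp flip: exp_add)
    then have "w i * 1 \<le> w i * (exp (b * M) * exp (- (\<rho> i * (b * u))))"
      using assms(2) i by (intro mult_left_mono) auto
    then show "w i \<le> exp (b * M) * (w i * exp (- (\<rho> i * (b * u))))"
      by (simp add: mult_ac)
  qed
  also have "\<dots> \<le> exp (b * M) * exp_sum I w \<rho> (b * u)"
    unfolding exp_sum_def sum_distrib_left
    using assms(1,2) by (intro sum_mono2) auto
  finally show ?thesis .
qed

text \<open>Splitting off the slow modes: the remaining modes decay by at least \<open>exp (-M a)\<close>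
  over the extra time \<open>a u\<close>.\<close>

lemma exp_sum_le_slow_weight:
  assumes "finite I" "\<And>i. i \<in> I \<Longrightarrow> 0 \<le> w i" "\<And>i. i \<in> I \<Longrightarrow> 0 \<le> \<rho> i"
    and "0 \<le> u" "0 \<le> a" "0 \<le> b"
  shows "exp_sum I w \<rho> ((b + a) * u) \<le> slow_weight I w \<rho> u M + exp (- (M * a)) * exp_sum I w \<rho> (b * u)"
proof -
  have "exp_sum I w \<rho> ((b + a) * u)
      \<le> (\<Sum>i\<in>I. (if \<rho> i * u < M then w i else 0) + exp (- (M * a)) * (w i * exp (- (\<rho> i * (b * u)))))"
    unfolding exp_sum_def
  proof (rule sum_mono)
    fix i assume i: "i \<in> I"
    show "w i * exp (- (\<rho> i * ((b + a) * u)))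
        \<le> (if \<rho> i * u < M then w i else 0) + exp (- (M * a)) * (w i * exp (- (\<rho> i * (b * u))))"
    proof (cases "\<rho> i * u < M")
      case True
      have "w i * exp (- (\<rho> i * ((b + a) * u))) \<le> w i"
        using assms i by (intro mult_left_le) auto
      moreover have "0 \<le> exp (- (M * a)) * (w i * exp (- (\<rho> i * (b * u))))"
        using assms(2)[OF i] by simp
      ultimately show ?thesis using True by simp
    next
      case False
      then have "M * a \<le> \<rho> i * u * a" using assms(5) by (intro mult_right_mono) auto
      then have "exp (- (\<rho> i * ((b + a) * u))) \<le> exp (- (M * a)) * exp (- (\<rho> i * (b * u)))"
        by (simp add: algebra_simps flip: exp_add)
      then show ?thesis using False assms(2)[OF i] by (simp add: mult_left_mono mult.left_commute)
    qed
  qed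
  also have "\<dots> = slow_weight I w \<rho> u M + exp (- (M * a)) * exp_sum I w \<rho> (b * u)"
    unfolding slow_weight_def exp_sum_def
    by (simp add: sum.distrib sum_distrib_left sum.inter_filter[OF assms(1)])
  finally show ?thesis .
qed

lemma exp_sum_ge_slow_weight:
  assumes "finite I" "\<And>i. i \<in> I \<Longrightarrow> 0 \<le> w i" "\<And>i. i \<in> I \<Longrightarrow> 0 \<le> \<rho> i"
    and "0 \<le> u" "0 \<le> a" "0 \<le> b"
  shows "exp (M * a) * (exp_sum I w \<rho> (b * u) - slow_weight I w \<rho> u M) \<le> exp_sum I w \<rho> ((b - a) * u)"
proof -
  have "exp (M * a) * (exp_sum I w \<rho> (b * u) - slow_weight I w \<rho> u M)
      = (\<Sum>i\<in>I. exp (M * a) * (w i * exp (- (\<rho> i * (b * u))) - (if \<rho> i * u < M then w i else 0)))"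
    unfolding slow_weight_def exp_sum_def
    by (simp add: sum_subtractf sum_distrib_left sum.inter_filter[OF assms(1)] right_diff_distrib)
  also have "\<dots> \<le> exp_sum I w \<rho> ((b - a) * u)"
    unfolding exp_sum_def
  proof (rule sum_mono)
    fix i assume i: "i \<in> I"
    show "exp (M * a) * (w i * exp (- (\<rho> i * (b * u))) - (if \<rho> i * u < M then w i else 0))
        \<le> w i * exp (- (\<rho> i * ((b - a) * u)))"
    proof (cases "\<rho> i * u < M")
      case True
      have "w i * exp (- (\<rho> i * (b * u))) \<le> w i"
        using assms i by (intro mult_left_le) auto
      then have "exp (M * a) * (w i * exp (- (\<rho> i * (b * u))) - w i) \<le> 0"
        by (simp add: mult_nonneg_nonpos)
      moreover have "0 \<le> w i * exp (- (\<rho> i * ((b - a) * u)))"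
        using assms(2)[OF i] by simp
      ultimately show ?thesis using True by simp
    next
      case False
      then have "M * a \<le> \<rho> i * u * a" using assms(5) by (intro mult_right_mono) auto
      then have "exp (M * a) * exp (- (\<rho> i * (b * u))) \<le> exp (- (\<rho> i * ((b - a) * u)))"
        by (simp add: algebra_simps flip: exp_add)
      then show ?thesis using False assms(2)[OF i] by (simp add: mult_left_mono mult.left_commute)
    qed
  qed
  finally show ?thesis .
qed

lemma exists_exp_neg_le: "0 < a \<Longrightarrow> 0 < e \<Longrightarrow> \<exists>M>0. exp (- (M * a)) \<le> (e :: real)"
proof -
  assume "0 < a" "0 < e"
  define M where "M = max 1 (ln (1 / e) / a)"
  have "ln (1 / e) \<le> M * a" using \<open>0 < a\<close> by (simp add: M_def field_simps max_def)
  then have "exp (- (M * a)) \<le> exp (- ln (1 / e))" by simp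
  then show ?thesis using \<open>0 < e\<close> by (intro exI[of _ M]) (simp add: M_def ln_div)
qed

lemma exists_exp_ge: "0 < a \<Longrightarrow> \<exists>M>0. Z \<le> exp (M * a) / (2 :: real)"
proof -
  assume "0 < a"
  define M where "M = max 1 (ln (2 * \<bar>Z\<bar> + 1) / a)"
  have "ln (2 * \<bar>Z\<bar> + 1) \<le> M * a" using \<open>0 < a\<close> by (simp add: M_def field_simps max_def)
  then have "exp (ln (2 * \<bar>Z\<bar> + 1)) \<le> exp (M * a)" by (rule exp_mono)
  then show ?thesis by (intro exI[of _ M]) (auto simp: M_def)
qed

lemma antimono_threshold:
  fixes h :: "real \<Rightarrow> real"
  assumes anti: "\<And>u v. 0 \<le> u \<Longrightarrow> u \<le> v \<Longrightarrow> h v \<le> h u" and "0 \<le> u0" "h u0 \<le> 1"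
  defines "T \<equiv> Inf {u. 0 \<le> u \<and> h u \<le> 1}"
  shows "0 \<le> T" and "T < v \<Longrightarrow> h v \<le> 1" and "0 \<le> v \<Longrightarrow> v < T \<Longrightarrow> 1 < h v"
    and "1 < h v \<Longrightarrow> v \<le> T"
proof -
  let ?X = "{u. 0 \<le> u \<and> h u \<le> 1}"
  have ne: "?X \<noteq> {}" using assms(2,3) by auto
  have bdd: "bdd_below ?X" by (rule bdd_belowI[of _ 0]) auto
  show "0 \<le> T" unfolding T_def by (rule cInf_greatest[OF ne]) auto
  show below: "h v \<le> 1" if "T < v" for v
  proof -
    obtain u where "u \<in> ?X" "u < v" using \<open>T < v\<close> cInf_less_iff[OF ne bdd] unfolding T_def by auto
    then show ?thesis using anti[of u v] by auto
  qed
  show "1 < h v \<Longrightarrow> v \<le> T" using below[of v] by fastforce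
  show "1 < h v" if "0 \<le> v" "v < T"
    using that cInf_lower[OF _ bdd, of v] unfolding T_def by force
qed

lemma cutoff_if_eventually_positive:
  assumes "\<forall>\<^sub>F n in sequentially. 0 < T n"
    and "\<And>a. 0 < a \<Longrightarrow> a < 1 \<Longrightarrow> (\<lambda>n. G n ((1 + a) * T n)) \<longlonglongrightarrow> 0"
    and "\<And>a. 0 < a \<Longrightarrow> a < 1 \<Longrightarrow> filterlim (\<lambda>n. G n ((1 - a) * T n)) at_top sequentially"
  shows "\<exists>t. cutoff G t"
proof -
  define t where "t n = (if 0 < T n then T n else 1)" for n
  have ev: "\<forall>\<^sub>F n in sequentially. t n = T n"
    using assms(1) by eventually_elim (simp add: t_def)
  have "cutoff G t"
    unfolding cutoff_def
  proof (intro conjI allI impI)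
    fix a :: real assume a: "0 < a \<and> a < 1"
    have "\<forall>\<^sub>F n in sequentially. G n ((1 + a) * T n) = G n ((1 + a) * t n)"
      using ev by eventually_elim simp
    then show "(\<lambda>n. G n ((1 + a) * t n)) \<longlonglongrightarrow> 0"
      using a by (intro Lim_transform_eventually[OF assms(2)]) auto
    have "\<forall>\<^sub>F n in sequentially. G n ((1 - a) * T n) = G n ((1 - a) * t n)"
      using ev by eventually_elim simp
    from filterlim_cong[OF refl refl this] show "filterlim (\<lambda>n. G n ((1 - a) * t n)) at_top sequentially"
      using assms(3) a by blast
  qed (simp add: t_def)
  then show ?thesis by blast
qed

lemma slow_weight_tendsto_0_of_cutoff:
  assumes "\<And>n. finite (I n)" "\<And>n i. i \<in> I n \<Longrightarrow> 0 \<le> w n i"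
    and "cutoff (\<lambda>n. exp_sum (I n) (w n) (\<rho> n)) t"
  shows "(\<lambda>n. slow_weight (I n) (w n) (\<rho> n) (t n) M) \<longlonglongrightarrow> 0"
proof (rule tendsto_sandwich[of "\<lambda>n. 0" _ _ "\<lambda>n. exp (3/2 * M) * exp_sum (I n) (w n) (\<rho> n) (3/2 * t n)"])
  show "\<forall>\<^sub>F n in sequentially. 0 \<le> slow_weight (I n) (w n) (\<rho> n) (t n) M"
    using assms(2) by (simp add: slow_weight_nonneg)
  show "\<forall>\<^sub>F n in sequentially.
      slow_weight (I n) (w n) (\<rho> n) (t n) M \<le> exp (3/2 * M) * exp_sum (I n) (w n) (\<rho> n) (3/2 * t n)"
    using assms(1,2) by (intro always_eventually allI slow_weight_le_exp_sum) auto
  have "(\<lambda>n. exp_sum (I n) (w n) (\<rho> n) ((1 + 1/2) * t n)) \<longlonglongrightarrow> 0"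
    by (rule cutoffD(2)[OF assms(3)]) simp_all
  then show "(\<lambda>n. exp (3/2 * M) * exp_sum (I n) (w n) (\<rho> n) (3/2 * t n)) \<longlonglongrightarrow> 0"
    by (intro tendsto_mult_right_zero) (simp add: algebra_simps)
qed simp

text \<open>Once the slow weight at the threshold time \<open>T\<close> vanishes, the profile falls off sharply
  around \<open>T\<close>.\<close>

lemma exp_sum_tendsto_0_after_threshold:
  assumes fin: "\<And>n. finite (I n)" and w: "\<And>n i. i \<in> I n \<Longrightarrow> 0 \<le> w n i"
    and \<rho>: "\<And>n i. i \<in> I n \<Longrightarrow> 0 \<le> \<rho> n i" and T: "\<forall>\<^sub>F n in sequentially. 0 < T n"
    and slow: "\<And>M. (\<lambda>n. slow_weight (I n) (w n) (\<rho> n) (T n) M) \<longlonglongrightarrow> 0"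
    and after: "\<forall>\<^sub>F n in sequentially. exp_sum (I n) (w n) (\<rho> n) ((1 + a/2) * T n) \<le> 1"
    and "0 < a"
  shows "(\<lambda>n. exp_sum (I n) (w n) (\<rho> n) ((1 + a) * T n)) \<longlonglongrightarrow> 0"
proof (rule tendstoI)
  fix e :: real assume "0 < e"
  then obtain M where M: "0 < M" "exp (- (M * (a/2))) \<le> e / 2"
    using exists_exp_neg_le[of "a/2" "e/2"] \<open>0 < a\<close> by auto
  have "\<forall>\<^sub>F n in sequentially. slow_weight (I n) (w n) (\<rho> n) (T n) M < e / 2"
    using \<open>0 < e\<close> by (intro order_tendstoD(2)[OF slow]) simp
  with T after show "\<forall>\<^sub>F n in sequentially. dist (exp_sum (I n) (w n) (\<rho> n) ((1 + a) * T n)) 0 < e"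
  proof eventually_elim
    case (elim n)
    have "exp_sum (I n) (w n) (\<rho> n) (((1 + a/2) + a/2) * T n)
        \<le> slow_weight (I n) (w n) (\<rho> n) (T n) M + exp (- (M * (a/2))) * exp_sum (I n) (w n) (\<rho> n) ((1 + a/2) * T n)"
      using elim \<open>0 < a\<close> by (intro exp_sum_le_slow_weight fin w \<rho>) auto
    also have "\<dots> < e"
      using elim M mult_left_le[OF elim(2) exp_ge_zero[of "- (M * (a/2))"]] by linarith
    finally show ?case using exp_sum_nonneg[of "I n" "w n"] w by (simp add: algebra_simps)
  qed
qed

lemma exp_sum_at_top_before_threshold:
  assumes fin: "\<And>n. finite (I n)" and w: "\<And>n i. i \<in> I n \<Longrightarrow> 0 \<le> w n i"
    and \<rho>: "\<And>n i. i \<in> I n \<Longrightarrow> 0 \<le> \<rho> n i" and T: "\<forall>\<^sub>F n in sequentially. 0 < T n"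
    and slow: "\<And>M. (\<lambda>n. slow_weight (I n) (w n) (\<rho> n) (T n) M) \<longlonglongrightarrow> 0"
    and before: "\<forall>\<^sub>F n in sequentially. 1 < exp_sum (I n) (w n) (\<rho> n) ((1 - a/2) * T n)"
    and "0 < a" "a < 1"
  shows "filterlim (\<lambda>n. exp_sum (I n) (w n) (\<rho> n) ((1 - a) * T n)) at_top sequentially"
  unfolding filterlim_at_top
proof
  fix Z :: real
  obtain M where M: "0 < M" "Z \<le> exp (M * (a/2)) / 2"
    using exists_exp_ge[of "a/2" Z] \<open>0 < a\<close> by auto
  have "\<forall>\<^sub>F n in sequentially. slow_weight (I n) (w n) (\<rho> n) (T n) M < 1/2"
    by (intro order_tendstoD(2)[OF slow]) simp
  with T before show "\<forall>\<^sub>F n in sequentially. Z \<le> exp_sum (I n) (w n) (\<rho> n) ((1 - a) * T n)"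
  proof eventually_elim
    case (elim n)
    have "exp (M * (a/2)) / 2
        \<le> exp (M * (a/2)) * (exp_sum (I n) (w n) (\<rho> n) ((1 - a/2) * T n) - slow_weight (I n) (w n) (\<rho> n) (T n) M)"
      using elim by (simp add: mult_left_mono)
    also have "\<dots> \<le> exp_sum (I n) (w n) (\<rho> n) (((1 - a/2) - a/2) * T n)"
      using elim \<open>0 < a\<close> \<open>a < 1\<close> by (intro exp_sum_ge_slow_weight fin w \<rho>) auto
    finally show ?case using M by simp
  qed
qed

lemma exp_sum_cutoff_at_threshold:
  assumes fin: "\<And>n. finite (I n)" and w: "\<And>n i. i \<in> I n \<Longrightarrow> 0 \<le> w n i"
    and \<sigma>: "\<And>n i. i \<in> I n \<Longrightarrow> 0 \<le> \<sigma> n i" and T: "\<forall>\<^sub>F n in sequentially. 0 < T n"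
    and slow: "\<And>M. (\<lambda>n. slow_weight (I n) (w n) (\<sigma> n) (T n) M) \<longlonglongrightarrow> 0"
    and threshold: "\<forall>\<^sub>F n in sequentially. (\<forall>v. T n < v \<longrightarrow> exp_sum (I n) (w n) (\<sigma> n) v \<le> 1)
      \<and> (\<forall>v. 0 \<le> v \<and> v < T n \<longrightarrow> 1 < exp_sum (I n) (w n) (\<sigma> n) v)"
  shows "\<exists>t. cutoff (\<lambda>n. exp_sum (I n) (w n) (\<sigma> n)) t"
proof (rule cutoff_if_eventually_positive[OF T])
  fix a :: real assume a: "0 < a" "a < 1"
  have "\<forall>\<^sub>F n in sequentially. exp_sum (I n) (w n) (\<sigma> n) ((1 + a/2) * T n) \<le> 1"
    using T threshold by eventually_elim (use a in \<open>simp add: mult_less_cancel_right2\<close>)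
  then show "(\<lambda>n. exp_sum (I n) (w n) (\<sigma> n) ((1 + a) * T n)) \<longlonglongrightarrow> 0"
    using a by (intro exp_sum_tendsto_0_after_threshold[OF fin w \<sigma> T slow])
  have "\<forall>\<^sub>F n in sequentially. 1 < exp_sum (I n) (w n) (\<sigma> n) ((1 - a/2) * T n)"
    using T threshold by eventually_elim (use a in \<open>simp add: mult_less_cancel_right1\<close>)
  then show "filterlim (\<lambda>n. exp_sum (I n) (w n) (\<sigma> n) ((1 - a) * T n)) at_top sequentially"
    using a by (intro exp_sum_at_top_before_threshold[OF fin w \<sigma> T slow])
qed

lemma slow_weight_tendsto_0_of_comparable_rates:
  assumes fin: "\<And>n. finite (I n)" and w: "\<And>n i. i \<in> I n \<Longrightarrow> 0 \<le> w n i"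
    and \<sigma>: "\<And>n i. i \<in> I n \<Longrightarrow> 0 \<le> \<sigma> n i" and "0 < p" "0 < q"
    and upper: "\<And>n i. i \<in> I n \<Longrightarrow> \<rho> n i \<le> q * \<sigma> n i"
    and cut: "cutoff (\<lambda>n. exp_sum (I n) (w n) (\<rho> n)) t"
    and T: "\<forall>\<^sub>F n in sequentially. p * t n / 2 \<le> T n"
  shows "(\<lambda>n. slow_weight (I n) (w n) (\<sigma> n) (T n) M) \<longlonglongrightarrow> 0"
proof (rule tendsto_sandwich[of "\<lambda>n. 0" _ _ "\<lambda>n. slow_weight (I n) (w n) (\<rho> n) (t n) (2 * q / p * M)"])
  show "\<forall>\<^sub>F n in sequentially. 0 \<le> slow_weight (I n) (w n) (\<sigma> n) (T n) M"
    using w by (simp add: slow_weight_nonneg)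
  show "\<forall>\<^sub>F n in sequentially.
      slow_weight (I n) (w n) (\<sigma> n) (T n) M \<le> slow_weight (I n) (w n) (\<rho> n) (t n) (2 * q / p * M)"
    using T
  proof eventually_elim
    case (elim n)
    have "\<rho> n i * t n \<le> 2 * q / p * (\<sigma> n i * T n)" if "i \<in> I n" for i
    proof -
      have "\<rho> n i * t n \<le> q * \<sigma> n i * t n"
        using upper[OF that] cutoffD(1)[OF cut, of n] by (simp add: mult_right_mono)
      also have "\<dots> \<le> q * \<sigma> n i * (2 * T n / p)"
        using elim \<open>0 < p\<close> \<open>0 < q\<close> \<sigma>[OF that] by (intro mult_left_mono) (auto simp: field_simps)
      finally show ?thesis by (simp add: mult_ac)
    qed
    then show ?case
      using \<open>0 < p\<close> \<open>0 < q\<close> by (intro slow_weight_mono_rates fin w) auto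
  qed
qed (use slow_weight_tendsto_0_of_cutoff[OF fin w cut] in auto)

text \<open>Comparable rates give comparable profiles up to time rescaling; the threshold
  \<open>T = inf {u. H u \<le> 1}\<close> of the new profile is comparable to the old cutoff time, so the old
  slow weights control the new ones.\<close>

lemma exp_sum_cutoff_transfer:
  assumes fin: "\<And>n. finite (I n)" and w: "\<And>n i. i \<in> I n \<Longrightarrow> 0 \<le> w n i"
    and \<sigma>: "\<And>n i. i \<in> I n \<Longrightarrow> 0 \<le> \<sigma> n i" and "0 < p" "0 < q"
    and lower: "\<And>n i. i \<in> I n \<Longrightarrow> p * \<sigma> n i \<le> \<rho> n i"
    and upper: "\<And>n i. i \<in> I n \<Longrightarrow> \<rho> n i \<le> q * \<sigma> n i"
    and cut: "cutoff (\<lambda>n. exp_sum (I n) (w n) (\<rho> n)) t"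
  shows "\<exists>t'. cutoff (\<lambda>n. exp_sum (I n) (w n) (\<sigma> n)) t'"
proof -
  define G where "G n = exp_sum (I n) (w n) (\<rho> n)" for n
  define H where "H n = exp_sum (I n) (w n) (\<sigma> n)" for n
  define T where "T n = Inf {u. 0 \<le> u \<and> H n u \<le> 1}" for n
  note t = cutoffD(1)[OF cut]
  \<comment> \<open>By comparison of rates, \<open>H\<close> drops below 1 by time \<open>3/2 q t\<close> and is still above 1 at \<open>p t / 2\<close>.\<close>
  have "\<forall>\<^sub>F n in sequentially. G n ((1 + 1/2) * t n) < 1"
    using cutoffD(2)[OF cut, of "1/2"] unfolding G_def by (intro order_tendstoD(2)) auto
  moreover have "\<forall>\<^sub>F n in sequentially. 1 < G n ((1 - 1/2) * t n)"
    using cutoffD(3)[OF cut, of "1/2"] unfolding G_def by (simp add: filterlim_at_top_dense)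
  ultimately have G_ev: "\<forall>\<^sub>F n in sequentially. G n (3/2 * t n) < 1 \<and> 1 < G n (t n / 2)"
    by eventually_elim (simp add: algebra_simps)
  have H_G: "H n (3/2 * q * t n) \<le> G n (3/2 * t n)" for n
    unfolding H_def G_def using upper t[of n] w
    by (intro exp_sum_mono_rates) (auto simp: algebra_simps mult_right_mono)
  have G_H: "G n (t n / 2) \<le> H n (p * t n / 2)" for n
    unfolding H_def G_def using lower t[of n] w
    by (intro exp_sum_mono_rates) (auto simp: algebra_simps mult_right_mono)
  have good: "\<forall>\<^sub>F n in sequentially. H n (3/2 * q * t n) \<le> 1 \<and> 1 < H n (p * t n / 2)"
    using G_ev by eventually_elim (use H_G G_H in \<open>fastforce intro: order.trans order.strict_trans2\<close>)
  have H_anti: "H n v \<le> H n u" if "u \<le> v" for n u v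
    unfolding H_def using w \<sigma> that by (rule exp_sum_antimono)
  have threshold: "(\<forall>v. T n < v \<longrightarrow> H n v \<le> 1) \<and> (\<forall>v. 0 \<le> v \<and> v < T n \<longrightarrow> 1 < H n v)
      \<and> (\<forall>v. 1 < H n v \<longrightarrow> v \<le> T n)" if "H n (3/2 * q * t n) \<le> 1" for n
    using antimono_threshold[of "H n" "3/2 * q * t n", OF H_anti _ that, folded T_def] \<open>0 < q\<close> t[of n]
    by auto
  have T_ge: "\<forall>\<^sub>F n in sequentially. p * t n / 2 \<le> T n"
    using good by eventually_elim (use threshold in blast)
  have "\<forall>\<^sub>F n in sequentially. 0 < T n"
    using T_ge by eventually_elim (use \<open>0 < p\<close> t in \<open>smt (verit) divide_pos_pos mult_pos_pos\<close>)
  moreover have "\<forall>\<^sub>F n in sequentially. (\<forall>v. T n < v \<longrightarrow> H n v \<le> 1) \<and> (\<forall>v. 0 \<le> v \<and> v < T n \<longrightarrow> 1 < H n v)"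
    using good by eventually_elim (use threshold in blast)
  ultimately show ?thesis
    unfolding H_def
    using slow_weight_tendsto_0_of_comparable_rates[OF fin w \<sigma> \<open>0 < p\<close> \<open>0 < q\<close> upper cut T_ge]
    by (intro exp_sum_cutoff_at_threshold[OF fin w \<sigma>])
qed

lemma exp_sum_cutoff_iff_comparable_rates:
  assumes fin: "\<And>n. finite (I n)" and w: "\<And>n i. i \<in> I n \<Longrightarrow> 0 \<le> w n i"
    and \<sigma>: "\<And>n i. i \<in> I n \<Longrightarrow> 0 \<le> \<sigma> n i" and "0 < p" "0 < q"
    and lower: "\<And>n i. i \<in> I n \<Longrightarrow> p * \<sigma> n i \<le> \<rho> n i"
    and upper: "\<And>n i. i \<in> I n \<Longrightarrow> \<rho> n i \<le> q * \<sigma> n i"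
  shows "(\<exists>t. cutoff (\<lambda>n. exp_sum (I n) (w n) (\<rho> n)) t) \<longleftrightarrow> (\<exists>t. cutoff (\<lambda>n. exp_sum (I n) (w n) (\<sigma> n)) t)"
proof (intro iffI; elim exE)
  show "\<exists>t'. cutoff (\<lambda>n. exp_sum (I n) (w n) (\<sigma> n)) t'" if "cutoff (\<lambda>n. exp_sum (I n) (w n) (\<rho> n)) t" for t
    using that by (intro exp_sum_cutoff_transfer[OF fin w \<sigma> \<open>0 < p\<close> \<open>0 < q\<close> lower upper])
  have \<rho>: "0 \<le> \<rho> n i" if "i \<in> I n" for n i
    using lower[OF that] \<sigma>[OF that] \<open>0 < p\<close> by (smt (verit) mult_nonneg_nonneg)
  show "\<exists>t'. cutoff (\<lambda>n. exp_sum (I n) (w n) (\<rho> n)) t'" if "cutoff (\<lambda>n. exp_sum (I n) (w n) (\<sigma> n)) t" for t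
  proof (rule exp_sum_cutoff_transfer[OF fin w \<rho> _ _ _ _ that])
    show "0 < 1 / q" "0 < 1 / p" using \<open>0 < p\<close> \<open>0 < q\<close> by simp_all
    show "1 / q * \<rho> n i \<le> \<sigma> n i" "\<sigma> n i \<le> 1 / p * \<rho> n i" if "i \<in> I n" for n i
      using lower[OF that] upper[OF that] \<open>0 < p\<close> \<open>0 < q\<close> by (simp_all add: field_simps)
  qed
qed

lemma exp_sum_eventually_ge_1:
  assumes w: "\<And>n i. i \<in> I n \<Longrightarrow> 0 \<le> w n i" and L: "\<And>n i. i \<in> I n \<Longrightarrow> \<rho> n i \<le> L"
    and total: "filterlim (\<lambda>n. \<Sum>i\<in>I n. w n i) at_top sequentially"
  shows "\<forall>\<^sub>F n in sequentially. \<forall>u. 0 \<le> u \<and> u \<le> B \<longrightarrow> 1 \<le> exp_sum (I n) (w n) (\<rho> n) u"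
proof -
  define L' where "L' = max L 0"
  have "\<forall>\<^sub>F n in sequentially. exp (L' * \<bar>B\<bar>) \<le> (\<Sum>i\<in>I n. w n i)"
    using total by (simp add: filterlim_at_top)
  then show ?thesis
  proof eventually_elim
    case (elim n)
    have "1 \<le> exp (- (L' * \<bar>B\<bar>)) * (\<Sum>i\<in>I n. w n i)"
      using elim mult_left_mono[OF elim, of "exp (- (L' * \<bar>B\<bar>))"] by (simp flip: exp_add)
    also have "\<dots> \<le> exp_sum (I n) (w n) (\<rho> n) u" if "0 \<le> u" "u \<le> B" for u
      using w L that by (intro exp_sum_ge_total_weight) (auto simp: L'_def le_max_iff_disj)
    finally show ?case by blast
  qed
qed

lemma exp_sum_discrete_cutoff_iff:
  assumes w: "\<And>n i. i \<in> I n \<Longrightarrow> 0 \<le> w n i"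
    and \<rho>: "\<And>n i. i \<in> I n \<Longrightarrow> 0 \<le> \<rho> n i" and L: "\<And>n i. i \<in> I n \<Longrightarrow> \<rho> n i \<le> L"
    and total: "filterlim (\<lambda>n. \<Sum>i\<in>I n. w n i) at_top sequentially"
  shows "(\<exists>t. discrete_cutoff (\<lambda>n m. exp_sum (I n) (w n) (\<rho> n) (real m)) t)
     \<longleftrightarrow> (\<exists>t. cutoff (\<lambda>n. exp_sum (I n) (w n) (\<rho> n)) t)"
proof -
  let ?G = "\<lambda>n. exp_sum (I n) (w n) (\<rho> n)"
  have anti: "?G n v \<le> ?G n u" if "u \<le> v" for n u v
    using w \<rho> that by (rule exp_sum_antimono)
  have nonneg: "0 \<le> ?G n u" for n u
    using w by (rule exp_sum_nonneg)
  show ?thesis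
  proof
    assume "\<exists>t. discrete_cutoff (\<lambda>n m. ?G n (real m)) t"
    then obtain t where disc: "discrete_cutoff (\<lambda>n m. ?G n (real m)) t" ..
    \<comment> \<open>The total weight blows up, so discrete cutoff times tend to infinity.\<close>
    moreover have "filterlim t at_top sequentially"
      using exp_sum_eventually_ge_1[OF w L total] disc by (rule discrete_cutoff_times_at_top)
    ultimately show "\<exists>t. cutoff ?G t" using cutoff_of_discrete_cutoff[of ?G, OF anti nonneg] by blast
  next
    assume "\<exists>t. cutoff ?G t"
    then obtain t where "cutoff ?G t" ..
    then show "\<exists>t. discrete_cutoff (\<lambda>n m. ?G n (real m)) t"
      by (intro exI discrete_cutoff_of_cutoff[of ?G, OF anti nonneg])
  qed
qed

lemma minus_ln_bounds:
  fixes \<delta> r :: real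
  assumes "0 < \<delta>" "\<delta> \<le> r" "r \<le> 1"
  shows "1 - r \<le> - ln r" "\<delta> * (- ln r) \<le> 1 - r"
proof -
  show "1 - r \<le> - ln r" using ln_le_minus_one[of r] assms by simp
  have "- ln r \<le> 1 / r - 1"
    using ln_le_minus_one[of "1 / r"] assms by (simp add: ln_div)
  then have "r * (- ln r) \<le> 1 - r"
    using assms mult_left_mono[of "- ln r" "1 / r - 1" r] by (simp add: field_simps)
  moreover have "\<delta> * (- ln r) \<le> r * (- ln r)"
    using assms by (intro mult_right_mono) auto
  ultimately show "\<delta> * (- ln r) \<le> 1 - r" by simp
qed

section \<open>Discrete versus continuous time\<close>

lemma spectral_discrete_cutoff_iff_cutoff:
  assumes fin: "\<And>n. finite (R n)" and "0 < \<delta>"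
    and R: "\<And>n r. r \<in> R n \<Longrightarrow> \<delta> \<le> r \<and> r \<le> 1 \<and> 0 \<le> w n r"
    and total: "filterlim (\<lambda>n. \<Sum>r\<in>R n. w n r) at_top sequentially"
  shows "(\<exists>t. discrete_cutoff (\<lambda>n m. exp_sum (R n) (w n) (\<lambda>r. -2 * ln r) (real m)) t)
     \<longleftrightarrow> (\<exists>t. cutoff (\<lambda>n. exp_sum (R n) (w n) (\<lambda>r. 2 * (1 - r))) t)"
proof -
  have r: "0 < r" "r \<le> 1" "\<delta> \<le> r" if "r \<in> R n" for n r
    using R[OF that] \<open>0 < \<delta>\<close> by auto
  have "(\<exists>t. discrete_cutoff (\<lambda>n m. exp_sum (R n) (w n) (\<lambda>r. -2 * ln r) (real m)) t)
      \<longleftrightarrow> (\<exists>t. cutoff (\<lambda>n. exp_sum (R n) (w n) (\<lambda>r. -2 * ln r)) t)"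
    using R total r \<open>0 < \<delta>\<close> by (intro exp_sum_discrete_cutoff_iff[where L = "-2 * ln \<delta>"]) auto
  also have "\<dots> \<longleftrightarrow> (\<exists>t. cutoff (\<lambda>n. exp_sum (R n) (w n) (\<lambda>r. 2 * (1 - r))) t)"
  proof (rule exp_sum_cutoff_iff_comparable_rates[where p = 1 and q = "1 / \<delta>"])
    show "1 * (2 * (1 - r)) \<le> -2 * ln r" if "r \<in> R n" for n r
      using minus_ln_bounds(1)[OF \<open>0 < \<delta>\<close> r(3,2)[OF that]] by simp
    show "-2 * ln r \<le> 1 / \<delta> * (2 * (1 - r))" if "r \<in> R n" for n r
      using minus_ln_bounds(2)[OF \<open>0 < \<delta>\<close> r(3,2)[OF that]] \<open>0 < \<delta>\<close> by (simp add: field_simps)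
  qed (use fin R \<open>0 < \<delta>\<close> in auto)
  finally show ?thesis .
qed

lemma d2_spectral_representation_family:
  assumes "\<And>n. lazy_reversible_chain (S n) (K n) (\<pi> n) (\<mu> n) c"
  obtains R w where "\<And>n. finite (R n)" "\<And>n r. r \<in> R n \<Longrightarrow> 2 * c - 1 \<le> r \<and> r \<le> 1 \<and> 0 \<le> w n r"
    "\<And>n. d2_disc (S n) (K n) (\<pi> n) (\<mu> n) = (\<lambda>m. sqrt (exp_sum (R n) (w n) (\<lambda>r. -2 * ln r) (real m)))"
    "\<And>n. d2_cont (S n) (K n) (\<pi> n) (\<mu> n) = (\<lambda>t. sqrt (exp_sum (R n) (w n) (\<lambda>r. 2 * (1 - r)) t))"
    "\<And>n. (\<Sum>r\<in>R n. w n r) = (\<Sum>y\<in>S n. (\<mu> n y)\<^sup>2 / \<pi> n y) - 1"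
proof -
  define P where "P n R w \<longleftrightarrow> finite R \<and> (\<forall>r\<in>R. 2 * c - 1 \<le> r \<and> r \<le> 1 \<and> 0 \<le> w r)
      \<and> (\<forall>m. d2_disc (S n) (K n) (\<pi> n) (\<mu> n) m = sqrt (exp_sum R w (\<lambda>r. -2 * ln r) (real m)))
      \<and> (\<forall>t. d2_cont (S n) (K n) (\<pi> n) (\<mu> n) t = sqrt (exp_sum R w (\<lambda>r. 2 * (1 - r)) t))
      \<and> (\<Sum>r\<in>R. w r) = (\<Sum>y\<in>S n. (\<mu> n y)\<^sup>2 / \<pi> n y) - 1" for n R w
  have "\<forall>n. \<exists>R w. P n R w"
    unfolding P_def using lazy_reversible_chain.d2_spectral_representation[OF assms] by blast
  then obtain R w where "\<forall>n. P n (R n) (w n)" by metis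
  then have Rw: "P n (R n) (w n)" for n by blast
  show thesis
  proof (rule that)
    show "finite (R n)" for n
      using Rw[of n] unfolding P_def by blast
    show "2 * c - 1 \<le> r \<and> r \<le> 1 \<and> 0 \<le> w n r" if "r \<in> R n" for n r
      using Rw[of n] that unfolding P_def by blast
    show "d2_disc (S n) (K n) (\<pi> n) (\<mu> n) = (\<lambda>m. sqrt (exp_sum (R n) (w n) (\<lambda>r. -2 * ln r) (real m)))" for n
      using Rw[of n] unfolding P_def by blast
    show "d2_cont (S n) (K n) (\<pi> n) (\<mu> n) = (\<lambda>t. sqrt (exp_sum (R n) (w n) (\<lambda>r. 2 * (1 - r)) t))" for n
      using Rw[of n] unfolding P_def by blast
    show "(\<Sum>r\<in>R n. w n r) = (\<Sum>y\<in>S n. (\<mu> n y)\<^sup>2 / \<pi> n y) - 1" for n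
      using Rw[of n] unfolding P_def by blast
  qed
qed

theorem corollary3p6:
  fixes S :: "nat \<Rightarrow> 'a set" and K :: "nat \<Rightarrow> 'a \<Rightarrow> 'a \<Rightarrow> real"
    and \<pi> :: "nat \<Rightarrow> 'a \<Rightarrow> real" and \<mu> :: "nat \<Rightarrow> 'a \<Rightarrow> real"
  assumes chain: "\<And>n. markov_kernel (S n) (K n)"
    and irr: "\<And>n. irreducible_chain (S n) (K n)"
    and rev: "\<And>n. reversible_chain (S n) (K n) (\<pi> n)"
    and init: "\<And>n. prob_on (S n) (\<mu> n)"
    and lazy: "\<exists>c>1/2. \<forall>n. \<forall>x\<in>S n. K n x x \<ge> c"
    and norm: "filterlim (\<lambda>n. \<Sum>y\<in>S n. (\<mu> n y)\<^sup>2 / \<pi> n y) at_top sequentially"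
    and mix: "\<exists>\<epsilon>0>0. filterlim (\<lambda>n. real (T2_disc (S n) (K n) (\<pi> n) (\<mu> n) \<epsilon>0)) at_top sequentially
                   \<or> filterlim (\<lambda>n. T2_cont (S n) (K n) (\<pi> n) (\<mu> n) \<epsilon>0) at_top sequentially"
  shows "L2_cutoff_disc S K \<pi> \<mu> \<longleftrightarrow> L2_cutoff_cont S K \<pi> \<mu>"
proof -
  obtain c where "c > 1/2" and "\<And>n x. x \<in> S n \<Longrightarrow> c \<le> K n x x" using lazy by blast
  then have chains: "lazy_reversible_chain (S n) (K n) (\<pi> n) (\<mu> n) c" for n
    using chain rev init by unfold_locales auto
  obtain R w where R: "\<And>n. finite (R n)" "\<And>n r. r \<in> R n \<Longrightarrow> 2 * c - 1 \<le> r \<and> r \<le> 1 \<and> 0 \<le> w n r"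
    and disc: "\<And>n. d2_disc (S n) (K n) (\<pi> n) (\<mu> n) = (\<lambda>m. sqrt (exp_sum (R n) (w n) (\<lambda>r. -2 * ln r) (real m)))"
    and cont: "\<And>n. d2_cont (S n) (K n) (\<pi> n) (\<mu> n) = (\<lambda>t. sqrt (exp_sum (R n) (w n) (\<lambda>r. 2 * (1 - r)) t))"
    and total: "\<And>n. (\<Sum>r\<in>R n. w n r) = (\<Sum>y\<in>S n. (\<mu> n y)\<^sup>2 / \<pi> n y) - 1"
    using d2_spectral_representation_family[of S K \<pi> \<mu> c, OF chains] by blast
  have "filterlim (\<lambda>n. \<Sum>r\<in>R n. w n r) at_top sequentially"
    unfolding total using filterlim_tendsto_add_at_top[OF tendsto_const norm, of "-1"] by simp
  then have "(\<exists>t. discrete_cutoff (\<lambda>n m. exp_sum (R n) (w n) (\<lambda>r. -2 * ln r) (real m)) t)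
      \<longleftrightarrow> (\<exists>t. cutoff (\<lambda>n. exp_sum (R n) (w n) (\<lambda>r. 2 * (1 - r))) t)"
    using R \<open>c > 1/2\<close> by (intro spectral_discrete_cutoff_iff_cutoff[where \<delta> = "2 * c - 1"]) auto
  moreover have "0 \<le> exp_sum (R n) (w n) \<rho> u" for n \<rho> u
    using R by (intro exp_sum_nonneg) auto
  ultimately show ?thesis
    unfolding L2_cutoff_disc_iff L2_cutoff_cont_iff disc cont
    by (simp add: discrete_cutoff_sqrt cutoff_sqrt)
qed

end
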